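(* Let $n\ge2$ and $f=(x_2-xx_1)^2\in\mathbb{C}\{x,x_1,\dots,x_n\}$, and let $E_0$ be the equation $\partial\alpha/\partial x=1/f$. Then $E_0\in Fr(f)$ and $Fr(f)/Sp(f)=\mathbb{C}\{x_3,\dots,x_n\}\,E_0$, i.e. the map $c\mapsto[\partial\alpha/\partial x=c/f]+Sp(f)$ is an isomorphism of complex vector spaces from $\mathbb{C}\{x_3,\dots,x_n\}$ (which is $\mathbb{C}$ when $n=2$) onto $Fr(f)/Sp(f)$.
   Context: Coordinates $(x,x_1,\dots,x_n)$ on $\mathbb{C}^{n+1}$. Here $f=f_1^2$ with $f_1=x_2-xx_1$ irreducible and $\{f_1=0\}$ not a union of orbits of $\partial/\partial x$. A homological equation $\partial\alpha/\partial x=A/f$ with $A\in\mathbb{C}\{x,x_1,\dots,x_n\}$ is special if it has a solution $\beta/(x_2-xx_1)$ with $\beta\in\mathbb{C}\{x,x_1,\dots,x_n\}$; it is free of residues if for every $P=(x^0,x_1^0,\dots,x_n^0)$ near $0$ with $f(P)=0$ and $f(x,x_1^0,\dots,x_n^0)\not\equiv0$, the form $(A/f)(x,x_1^0,\dots,x_n^0)\,dx$ has zero residue at $x^0$. $Fr(f)$ is the vector space of free of residues such equations (identified with their right-hand sides $A$) and $Sp(f)$ the subspace of special ones. *)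

theory Defs
  imports "HOL-Complex_Analysis.Complex_Analysis"
begin

text \<open>Points of C^(n+1) are functions z :: nat => complex; the coordinate x is z 0
  and x_i is z i (1 <= i <= n); coordinates beyond n are ignored.\<close>

definition multi_idx :: "nat \<Rightarrow> (nat \<Rightarrow> nat) set" where
  "multi_idx n = {\<alpha>. \<forall>i>n. \<alpha> i = 0}"

definition monomial_val :: "nat \<Rightarrow> (nat \<Rightarrow> nat) \<Rightarrow> (nat \<Rightarrow> complex) \<Rightarrow> complex" where
  "monomial_val n \<alpha> z = (\<Prod>i\<le>n. z i ^ \<alpha> i)"

definition conv_ps :: "nat \<Rightarrow> ((nat \<Rightarrow> nat) \<Rightarrow> complex) set" where
  "conv_ps n = {c. (\<forall>\<alpha>. \<alpha> \<notin> multi_idx n \<longrightarrow> c \<alpha> = 0) \<and>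
      (\<exists>r>0. (\<lambda>\<alpha>. norm (c \<alpha>) * r ^ (\<Sum>i\<le>n. \<alpha> i)) summable_on multi_idx n)}"

definition ps_eval :: "nat \<Rightarrow> ((nat \<Rightarrow> nat) \<Rightarrow> complex) \<Rightarrow> (nat \<Rightarrow> complex) \<Rightarrow> complex" where
  "ps_eval n c z = (\<Sum>\<^sub>\<infinity>\<alpha>\<in>multi_idx n. c \<alpha> * monomial_val n \<alpha> z)"

definition conv_ps_rest :: "nat \<Rightarrow> ((nat \<Rightarrow> nat) \<Rightarrow> complex) set" where
  "conv_ps_rest n = {c \<in> conv_ps n. \<forall>\<alpha>. c \<alpha> \<noteq> 0 \<longrightarrow> \<alpha> 0 = 0 \<and> \<alpha> 1 = 0 \<and> \<alpha> 2 = 0}"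

definition one_ps :: "(nat \<Rightarrow> nat) \<Rightarrow> complex" where
  "one_ps \<alpha> = (if \<alpha> = (\<lambda>_. 0) then 1 else 0)"

definition polydisc :: "nat \<Rightarrow> real \<Rightarrow> (nat \<Rightarrow> complex) \<Rightarrow> bool" where
  "polydisc n \<epsilon> z \<longleftrightarrow> (\<forall>i\<le>n. norm (z i) < \<epsilon>)"

text \<open>Fr(f): right-hand sides A of d alpha/dx = A/f that are free of residues.\<close>
definition Fr :: "nat \<Rightarrow> ((nat \<Rightarrow> complex) \<Rightarrow> complex) \<Rightarrow> ((nat \<Rightarrow> nat) \<Rightarrow> complex) set" where
  "Fr n f = {A \<in> conv_ps n. \<exists>\<epsilon>>0. \<forall>z. polydisc n \<epsilon> z \<longrightarrow> f z = 0 \<longrightarrow>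
      (\<exists>t. f (z(0 := t)) \<noteq> 0) \<longrightarrow>
      residue (\<lambda>t. ps_eval n A (z(0 := t)) / f (z(0 := t))) (z 0) = 0}"

definition Sp :: "nat \<Rightarrow> ((nat \<Rightarrow> complex) \<Rightarrow> complex) \<Rightarrow> ((nat \<Rightarrow> nat) \<Rightarrow> complex) set" where
  "Sp n f = {A \<in> Fr n f. \<exists>\<beta>\<in>conv_ps n. \<exists>\<epsilon>>0. \<forall>z. polydisc n \<epsilon> z \<longrightarrow> f z \<noteq> 0 \<longrightarrow>
      ((\<lambda>t. ps_eval n \<beta> (z(0 := t)) / (z 2 - t * z 1)) has_field_derivative
         (ps_eval n A z / f z)) (at (z 0))}"

end

theory Submission
  imports Defs "HOL-Computational_Algebra.Polynomial"
begin

text \<open>Write \<open>f = f\<^sub>1\<^sup>2\<close> with \<open>f\<^sub>1 = x\<^sub>2 - x x\<^sub>1\<close>. At a point of \<open>f\<^sub>1 = 0\<close> with \<open>x\<^sub>1 \<noteq> 0\<close>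
  the residue of \<open>A/f\<close> in \<open>x\<close> is \<open>\<partial>\<^sub>xA / x\<^sub>1\<^sup>2\<close>, so \<open>A\<close> is free of residues iff \<open>\<partial>\<^sub>xA\<close> vanishes
  on \<open>x\<^sub>2 = x x\<^sub>1\<close>. Since \<open>\<partial>\<^sub>x(\<beta>/f\<^sub>1) = (f\<^sub>1 \<partial>\<^sub>x\<beta> + x\<^sub>1 \<beta>)/f\<close>, the equation is special iff
  \<open>A = f\<^sub>1 \<partial>\<^sub>x\<beta> + x\<^sub>1 \<beta>\<close> for a convergent \<open>\<beta>\<close>. Comparing coefficients, this can be solved along
  the diagonals \<open>(k + j, a + j, b - j)\<close> of exponents of \<open>(x, x\<^sub>1, x\<^sub>2)\<close> up to the part of \<open>A\<close> free of
  \<open>x, x\<^sub>1, x\<^sub>2\<close>, the obstructions being exactly the coefficients of \<open>\<partial>\<^sub>xA\<close> restricted to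
  \<open>x\<^sub>2 = x x\<^sub>1\<close>; the explicit solution obeys a geometric bound in the degree and hence converges.
  Conversely a nonzero \<open>c(x\<^sub>3, ..., x\<^sub>n)\<close> is not special: on the line \<open>x\<^sub>1 = 0, x\<^sub>2 = s\<close> it would
  equal \<open>s \<partial>\<^sub>x\<beta>\<close>, which tends to \<open>0\<close> with \<open>s\<close>. Vanishing near the origin is turned into vanishing
  of coefficients by an identity theorem, proved via homogeneous parts and a Kronecker substitution.\<close>

section \<open>Convergent power series\<close>

definition total_deg :: "nat \<Rightarrow> (nat \<Rightarrow> nat) \<Rightarrow> nat" where
  "total_deg n \<alpha> = (\<Sum>i\<le>n. \<alpha> i)"

definition abs_summable_ps :: "nat \<Rightarrow> ((nat \<Rightarrow> nat) \<Rightarrow> complex) \<Rightarrow> real \<Rightarrow> bool" where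
  "abs_summable_ps n P r \<longleftrightarrow> (\<lambda>\<alpha>. norm (P \<alpha>) * r ^ total_deg n \<alpha>) summable_on multi_idx n"

definition majorant :: "nat \<Rightarrow> ((nat \<Rightarrow> nat) \<Rightarrow> complex) \<Rightarrow> real \<Rightarrow> real" where
  "majorant n P r = (\<Sum>\<^sub>\<infinity>\<alpha>\<in>multi_idx n. norm (P \<alpha>) * r ^ total_deg n \<alpha>)"

lemma conv_ps_iff:
  "c \<in> conv_ps n \<longleftrightarrow> (\<forall>\<alpha>. \<alpha> \<notin> multi_idx n \<longrightarrow> c \<alpha> = 0) \<and> (\<exists>r>0. abs_summable_ps n c r)"
  unfolding conv_ps_def abs_summable_ps_def total_deg_def by simp

lemma conv_psE:
  assumes "c \<in> conv_ps n"
  obtains r where "r > 0" "abs_summable_ps n c r"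
  using assms unfolding conv_ps_iff by auto

lemma multi_idx_upd: "\<alpha> \<in> multi_idx n \<Longrightarrow> i \<le> n \<Longrightarrow> \<alpha>(i := k) \<in> multi_idx n"
  unfolding multi_idx_def by auto

lemma total_deg_upd:
  assumes "i \<le> n"
  shows "total_deg n (\<alpha>(i := k)) + \<alpha> i = total_deg n \<alpha> + k"
proof -
  have "total_deg n (\<alpha>(i := k)) = k + (\<Sum>j\<in>{..n}-{i}. \<alpha> j)"
    unfolding total_deg_def using assms by (subst sum.remove[of _ i]) (auto intro!: sum.cong)
  moreover have "total_deg n \<alpha> = \<alpha> i + (\<Sum>j\<in>{..n}-{i}. \<alpha> j)"
    unfolding total_deg_def using assms by (subst sum.remove[of _ i]) auto
  ultimately show ?thesis by simp
qed

lemma le_total_deg: "i \<le> n \<Longrightarrow> \<alpha> i \<le> total_deg n \<alpha>"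
  unfolding total_deg_def by (rule member_le_sum) auto

lemma monomial_val_upd:
  assumes "i \<le> n"
  shows "monomial_val n \<alpha> (z(i := t)) = t ^ \<alpha> i * (\<Prod>j\<in>{..n}-{i}. z j ^ \<alpha> j)"
proof -
  have "monomial_val n \<alpha> (z(i := t)) = t ^ \<alpha> i * (\<Prod>j\<in>{..n}-{i}. (z(i := t)) j ^ \<alpha> j)"
    unfolding monomial_val_def using assms by (subst prod.remove[of _ i]) auto
  also have "(\<Prod>j\<in>{..n}-{i}. (z(i := t)) j ^ \<alpha> j) = (\<Prod>j\<in>{..n}-{i}. z j ^ \<alpha> j)"
    by (rule prod.cong) auto
  finally show ?thesis .
qed

lemma monomial_val_upd_0:
  "monomial_val n \<alpha> (z(0 := t)) = t ^ \<alpha> 0 * monomial_val n \<alpha> (z(0 := 1))"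
  by (simp add: monomial_val_upd)

lemma monomial_val_scale: "monomial_val n \<alpha> (\<lambda>i. t * z i) = t ^ total_deg n \<alpha> * monomial_val n \<alpha> z"
  unfolding monomial_val_def total_deg_def by (simp add: power_mult_distrib prod.distrib power_sum)

lemma norm_monomial_val_le:
  assumes "\<forall>i\<le>n. norm (z i) \<le> r"
  shows "norm (monomial_val n \<alpha> z) \<le> r ^ total_deg n \<alpha>"
proof -
  have "norm (monomial_val n \<alpha> z) = (\<Prod>i\<le>n. norm (z i) ^ \<alpha> i)"
    unfolding monomial_val_def by (simp add: prod_norm[symmetric] norm_power)
  also have "\<dots> \<le> (\<Prod>i\<le>n. r ^ \<alpha> i)"
    by (rule prod_mono) (use assms in \<open>auto intro: power_mono\<close>)
  also have "\<dots> = r ^ total_deg n \<alpha>" unfolding total_deg_def by (simp add: power_sum)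
  finally show ?thesis .
qed

lemma abs_summable_ps_terms:
  assumes "abs_summable_ps n P r" "\<forall>i\<le>n. norm (z i) \<le> r"
  shows "(\<lambda>\<alpha>. norm (P \<alpha> * monomial_val n \<alpha> z)) summable_on multi_idx n"
proof (rule summable_on_comparison_test[OF assms(1)[unfolded abs_summable_ps_def]])
  show "norm (P \<alpha> * monomial_val n \<alpha> z) \<le> norm (P \<alpha>) * r ^ total_deg n \<alpha>" for \<alpha>
    using norm_monomial_val_le[OF assms(2)] by (simp add: norm_mult mult_left_mono)
qed auto

lemma has_sum_ps_eval:
  assumes "abs_summable_ps n P r" "\<forall>i\<le>n. norm (z i) \<le> r"
  shows "((\<lambda>\<alpha>. P \<alpha> * monomial_val n \<alpha> z) has_sum ps_eval n P z) (multi_idx n)"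
  using abs_summable_ps_terms[OF assms] summable_on_iff_abs_summable_on_complex
  unfolding ps_eval_def by (metis has_sum_infsum)

lemma abs_summable_ps_mono:
  assumes "abs_summable_ps n P r" "0 \<le> r'" "r' \<le> r"
  shows "abs_summable_ps n P r'"
  unfolding abs_summable_ps_def
proof (rule summable_on_comparison_test[OF assms(1)[unfolded abs_summable_ps_def]])
  show "norm (P \<alpha>) * r' ^ total_deg n \<alpha> \<le> norm (P \<alpha>) * r ^ total_deg n \<alpha>" for \<alpha>
    using assms by (intro mult_left_mono power_mono) auto
qed (use assms in auto)

lemma majorant_nonneg: "r \<ge> 0 \<Longrightarrow> majorant n P r \<ge> 0"
  unfolding majorant_def by (rule infsum_nonneg) auto

lemma norm_ps_eval_le_majorant:
  assumes "abs_summable_ps n P r" "\<forall>i\<le>n. norm (z i) \<le> r"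
  shows "norm (ps_eval n P z) \<le> majorant n P r"
proof -
  have "norm (ps_eval n P z) \<le> (\<Sum>\<^sub>\<infinity>\<alpha>\<in>multi_idx n. norm (P \<alpha> * monomial_val n \<alpha> z))"
    unfolding ps_eval_def by (rule norm_infsum_bound) (use abs_summable_ps_terms[OF assms] in auto)
  also have "\<dots> \<le> majorant n P r"
    unfolding majorant_def
    using abs_summable_ps_terms[OF assms] assms(1)[unfolded abs_summable_ps_def]
      norm_monomial_val_le[OF assms(2)]
    by (intro infsum_mono) (auto simp: norm_mult intro: mult_left_mono)
  finally show ?thesis .
qed

lemma norm_coeff_le_majorant:
  assumes "abs_summable_ps n P \<rho>" "0 < \<rho>" "\<rho> \<le> 1" "\<gamma> \<in> multi_idx n" "total_deg n \<gamma> \<le> m"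
  shows "norm (P \<gamma>) * \<rho> ^ m \<le> majorant n P \<rho>"
proof -
  have "norm (P \<gamma>) * \<rho> ^ m \<le> norm (P \<gamma>) * \<rho> ^ total_deg n \<gamma>"
    using assms by (intro mult_left_mono power_decreasing) auto
  also have "\<dots> = (\<Sum>\<^sub>\<infinity>\<beta>\<in>{\<gamma>}. norm (P \<beta>) * \<rho> ^ total_deg n \<beta>)" by simp
  also have "\<dots> \<le> majorant n P \<rho>"
    unfolding majorant_def
    by (rule infsum_mono_neutral) (use assms in \<open>auto simp: abs_summable_ps_def\<close>)
  finally show ?thesis .
qed

lemma has_sum_infsum_fibres:
  fixes g :: "'a \<Rightarrow> 'c::banach" and \<phi> :: "'a \<Rightarrow> 'b"
  assumes "g summable_on M"
  shows "((\<lambda>k. \<Sum>\<^sub>\<infinity>\<alpha>\<in>{\<alpha>\<in>M. \<phi> \<alpha> = k}. g \<alpha>) has_sum (\<Sum>\<^sub>\<infinity>\<alpha>\<in>M. g \<alpha>)) UNIV"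
proof -
  have bij: "bij_betw (\<lambda>\<alpha>. (\<phi> \<alpha>, \<alpha>)) M (Sigma UNIV (\<lambda>k. {\<alpha>\<in>M. \<phi> \<alpha> = k}))"
    by (rule bij_betwI[where g=snd]) auto
  have s: "(\<lambda>(k, \<alpha>). g \<alpha>) summable_on Sigma UNIV (\<lambda>k. {\<alpha>\<in>M. \<phi> \<alpha> = k})"
    using summable_on_reindex_bij_betw[OF bij, of "\<lambda>(k, \<alpha>). g \<alpha>"] assms by simp
  have "(\<Sum>\<^sub>\<infinity>(k, \<alpha>)\<in>Sigma UNIV (\<lambda>k. {\<alpha>\<in>M. \<phi> \<alpha> = k}). g \<alpha>) = (\<Sum>\<^sub>\<infinity>\<alpha>\<in>M. g \<alpha>)"
    using infsum_reindex_bij_betw[OF bij, of "\<lambda>(k, \<alpha>). g \<alpha>"] by simp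
  then show ?thesis
    using summable_on_Sigma_banach[OF s] infsum_Sigma'_banach[OF s] by (metis has_sum_infsum)
qed

section \<open>Differentiation in \<open>x\<close> and residues\<close>

definition Dx :: "((nat \<Rightarrow> nat) \<Rightarrow> complex) \<Rightarrow> (nat \<Rightarrow> nat) \<Rightarrow> complex" where
  "Dx P \<alpha> = of_nat (\<alpha> 0 + 1) * P (\<alpha>(0 := \<alpha> 0 + 1))"

lemma abs_summable_ps_Dx:
  assumes "abs_summable_ps n P r" "r > 0"
  shows "abs_summable_ps n (Dx P) (r/2)"
proof -
  let ?M = "multi_idx n"
  let ?h = "\<lambda>\<alpha>::nat\<Rightarrow>nat. \<alpha>(0 := \<alpha> 0 + 1)"
  let ?g = "\<lambda>\<alpha>. norm (P \<alpha>) * r ^ total_deg n \<alpha>"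
  have "inj_on ?h ?M"
    by (rule inj_onI) (metis add_right_cancel fun_upd_same fun_upd_idem_iff fun_upd_upd)
  moreover have "?g summable_on ?h ` ?M"
    using assms(1) unfolding abs_summable_ps_def
    by (rule summable_on_subset_banach) (auto intro: multi_idx_upd)
  ultimately have "(\<lambda>\<alpha>. (?g \<circ> ?h) \<alpha> * (1/r)) summable_on ?M"
    using summable_on_reindex summable_on_cmult_left by blast
  then show ?thesis unfolding abs_summable_ps_def
  proof (rule summable_on_comparison_test)
    fix \<alpha> assume "\<alpha> \<in> ?M"
    have deg: "total_deg n (?h \<alpha>) = total_deg n \<alpha> + 1"
      using total_deg_upd[of 0 n \<alpha> "\<alpha> 0 + 1"] by simp
    have "real (\<alpha> 0 + 1) \<le> 2 ^ \<alpha> 0"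
      using less_exp[of "\<alpha> 0"] by (metis Suc_eq_plus1 Suc_leI of_nat_le_iff of_nat_numeral of_nat_power)
    also have "\<dots> \<le> 2 ^ total_deg n \<alpha>" by (rule power_increasing) (auto intro: le_total_deg)
    finally have "norm (Dx P \<alpha>) * (r/2) ^ total_deg n \<alpha>
        \<le> norm (P (?h \<alpha>)) * (2 ^ total_deg n \<alpha> * (r/2) ^ total_deg n \<alpha>)"
      unfolding Dx_def norm_mult norm_of_nat using assms(2)
      by (simp add: mult_ac mult_right_mono)
    also have "\<dots> = (?g \<circ> ?h) \<alpha> * (1/r)"
      using assms(2) deg by (simp add: power_mult_distrib[symmetric])
    finally show "norm (Dx P \<alpha>) * (r/2) ^ total_deg n \<alpha> \<le> (?g \<circ> ?h) \<alpha> * (1/r)" .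
  qed (use assms(2) in auto)
qed

lemma sums_ps_eval_upd_0:
  assumes "abs_summable_ps n P r" "\<forall>i\<le>n. i \<noteq> 0 \<longrightarrow> norm (z i) \<le> r" "norm t \<le> r"
  shows "(\<lambda>k. (\<Sum>\<^sub>\<infinity>\<alpha>\<in>{\<alpha>\<in>multi_idx n. \<alpha> 0 = k}. P \<alpha> * monomial_val n \<alpha> (z(0 := 1))) * t ^ k)
           sums ps_eval n P (z(0 := t))"
proof -
  let ?M = "multi_idx n"
  have "((\<lambda>\<alpha>. P \<alpha> * monomial_val n \<alpha> (z(0 := t))) has_sum ps_eval n P (z(0 := t))) ?M"
    by (rule has_sum_ps_eval[OF assms(1)]) (use assms in auto)
  from has_sum_infsum_fibres[OF has_sum_imp_summable[OF this], of "\<lambda>\<alpha>. \<alpha> 0"]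
  have "((\<lambda>k. \<Sum>\<^sub>\<infinity>\<alpha>\<in>{\<alpha>\<in>?M. \<alpha> 0 = k}. P \<alpha> * monomial_val n \<alpha> (z(0 := t)))
      has_sum ps_eval n P (z(0 := t))) UNIV"
    unfolding ps_eval_def .
  moreover have "(\<Sum>\<^sub>\<infinity>\<alpha>\<in>{\<alpha>\<in>?M. \<alpha> 0 = k}. P \<alpha> * monomial_val n \<alpha> (z(0 := t)))
      = (\<Sum>\<^sub>\<infinity>\<alpha>\<in>{\<alpha>\<in>?M. \<alpha> 0 = k}. P \<alpha> * monomial_val n \<alpha> (z(0 := 1))) * t ^ k" for k
    by (subst infsum_cmult_left'[symmetric], rule infsum_cong) (subst monomial_val_upd_0, simp)
  ultimately show ?thesis by (intro has_sum_imp_sums) simp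
qed

lemma has_field_derivative_ps_eval:
  assumes "abs_summable_ps n P r" "r > 0" "\<forall>i\<le>n. norm (z i) < r/2"
  shows "((\<lambda>t. ps_eval n P (z(0 := t))) has_field_derivative ps_eval n (Dx P) z) (at (z 0))"
proof -
  let ?M = "multi_idx n"
  define a where "a k = (\<Sum>\<^sub>\<infinity>\<alpha>\<in>{\<alpha>\<in>?M. \<alpha> 0 = k}. P \<alpha> * monomial_val n \<alpha> (z(0 := 1)))" for k
  have sums: "(\<lambda>k. a k * t ^ k) sums ps_eval n P (z(0 := t))" if "norm t \<le> r" for t
    unfolding a_def by (rule sums_ps_eval_upd_0[OF assms(1) _ that]) (use assms in force)
  have "norm (z 0) < norm (complex_of_real r)"
    using assms by force
  from termdiffs_strong[OF _ this]
  have "((\<lambda>t. \<Sum>k. a k * t ^ k) has_field_derivative (\<Sum>k. diffs a k * z 0 ^ k)) (at (z 0))"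
    using sums[of "complex_of_real r"] assms(2) sums_summable by auto
  then have deriv: "((\<lambda>t. ps_eval n P (z(0 := t))) has_field_derivative (\<Sum>k. diffs a k * z 0 ^ k)) (at (z 0))"
  proof (rule has_field_derivative_transform_within_open[of _ _ _ "ball 0 r"])
    show "z 0 \<in> ball 0 r" using assms by force
    show "(\<Sum>k. a k * t ^ k) = ps_eval n P (z(0 := t))" if "t \<in> ball 0 r" for t
      using sums_unique[OF sums] that by simp
  qed simp
  have diffs_eq: "(\<Sum>\<^sub>\<infinity>\<alpha>\<in>{\<alpha>\<in>?M. \<alpha> 0 = k}. Dx P \<alpha> * monomial_val n \<alpha> (z(0 := 1))) = diffs a k" for k
  proof -
    have bij: "bij_betw (\<lambda>\<alpha>. \<alpha>(0 := k + 1)) {\<alpha>\<in>?M. \<alpha> 0 = k} {\<alpha>\<in>?M. \<alpha> 0 = Suc k}"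
      by (rule bij_betwI[where g="\<lambda>\<alpha>. \<alpha>(0 := k)"]) (auto intro: multi_idx_upd)
    have "monomial_val n (\<alpha>(0 := k + 1)) (z(0 := 1)) = monomial_val n \<alpha> (z(0 := 1))" for \<alpha>
      by (simp add: monomial_val_upd)
    then have "(\<Sum>\<^sub>\<infinity>\<alpha>\<in>{\<alpha>\<in>?M. \<alpha> 0 = k}. Dx P \<alpha> * monomial_val n \<alpha> (z(0 := 1)))
        = of_nat (Suc k) * (\<Sum>\<^sub>\<infinity>\<alpha>\<in>{\<alpha>\<in>?M. \<alpha> 0 = k}.
            P (\<alpha>(0 := k + 1)) * monomial_val n (\<alpha>(0 := k + 1)) (z(0 := 1)))"
      by (subst infsum_cmult_right'[symmetric], intro infsum_cong) (simp add: Dx_def)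
    also have "\<dots> = diffs a k"
      unfolding a_def diffs_def
      using infsum_reindex_bij_betw[OF bij, of "\<lambda>\<alpha>. P \<alpha> * monomial_val n \<alpha> (z(0 := 1))"] by simp
    finally show ?thesis .
  qed
  have "(\<lambda>k. diffs a k * z 0 ^ k) sums ps_eval n (Dx P) (z(0 := z 0))"
    unfolding diffs_eq[symmetric]
    by (rule sums_ps_eval_upd_0[OF abs_summable_ps_Dx[OF assms(1,2)]]) (use assms in \<open>auto intro: less_imp_le\<close>)
  with deriv show ?thesis by (simp add: sums_iff)
qed

lemma residue_ps_eval_over_square:
  assumes "abs_summable_ps n P r" "r > 0" "\<forall>i\<le>n. norm (z i) < r/2" "z 2 = z 0 * z 1"
  shows "residue (\<lambda>t. ps_eval n P (z(0 := t)) / (z 2 - t * z 1)^2) (z 0)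
       = ps_eval n (Dx P) z / (z 1)^2"
proof -
  define h where "h t = ps_eval n P (z(0 := t)) / (z 1)^2" for t
  let ?s = "ball (0::complex) (r/2)"
  have deriv: "(h has_field_derivative ps_eval n (Dx P) (z(0 := t)) / (z 1)^2) (at t)"
    if "t \<in> ?s" for t
  proof -
    have "\<forall>i\<le>n. norm ((z(0 := t)) i) < r/2" using assms(3) that by auto
    from has_field_derivative_ps_eval[OF assms(1,2) this]
    have "((\<lambda>t. ps_eval n P (z(0 := t))) has_field_derivative ps_eval n (Dx P) (z(0 := t))) (at t)"
      by (simp only: fun_upd_upd fun_upd_same)
    then show ?thesis unfolding h_def by (rule DERIV_cdivide)
  qed
  then have "h holomorphic_on ?s"
    by (meson field_differentiable_at_within field_differentiable_def holomorphic_on_def)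
  moreover have z0: "z 0 \<in> ?s" using assms(3) by auto
  moreover have "ps_eval n P (z(0 := t)) / (z 2 - t * z 1)^2 = h t / (t - z 0) ^ Suc 1" for t
    using assms(4) unfolding h_def by (simp add: power2_eq_square algebra_simps divide_divide_eq_left)
  ultimately have "residue (\<lambda>t. ps_eval n P (z(0 := t)) / (z 2 - t * z 1)^2) (z 0) = deriv h (z 0)"
    using residue_holomorphic_over_power[of ?s "z 0" h 1] by simp
  also have "\<dots> = ps_eval n (Dx P) z / (z 1)^2"
    using DERIV_imp_deriv[OF deriv[OF z0]] by simp
  finally show ?thesis .
qed

section \<open>An identity theorem\<close>

lemma digit_expansion_inj:
  fixes a b :: "nat \<Rightarrow> nat"
  assumes "\<forall>i\<le>m. a i < B" "\<forall>i\<le>m. b i < B"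
    and "(\<Sum>i\<le>m. a i * B ^ i) = (\<Sum>i\<le>m. b i * B ^ i)"
  shows "\<forall>i\<le>m. a i = b i"
  using assms
proof (induction m arbitrary: a b)
  case 0
  then show ?case by simp
next
  case (Suc m)
  have split: "(\<Sum>i\<le>Suc m. c i * B ^ i) = c 0 + B * (\<Sum>i\<le>m. c (Suc i) * B ^ i)" for c :: "nat \<Rightarrow> nat"
    by (subst sum.atMost_Suc_shift) (simp add: sum_distrib_left mult_ac del: sum.atMost_Suc)
  have eq: "a 0 + B * (\<Sum>i\<le>m. a (Suc i) * B ^ i) = b 0 + B * (\<Sum>i\<le>m. b (Suc i) * B ^ i)"
    using Suc.prems(3) unfolding split .
  have lt: "a 0 < B" "b 0 < B" using Suc.prems by auto
  have "a 0 = b 0"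
    using arg_cong[OF eq, of "\<lambda>x. x mod B"] lt by simp
  moreover have "\<forall>i\<le>m. a (Suc i) = b (Suc i)"
    using eq lt \<open>a 0 = b 0\<close> Suc.prems by (intro Suc.IH) auto
  ultimately show ?case by (metis Suc_le_mono not0_implies_Suc)
qed

lemma multi_idx_eq_if_digit_expansion_eq:
  assumes "\<alpha> \<in> multi_idx n" "\<gamma> \<in> multi_idx n" "\<forall>i\<le>n. \<alpha> i < B" "\<forall>i\<le>n. \<gamma> i < B"
    and "(\<Sum>i\<le>n. \<alpha> i * B ^ i) = (\<Sum>i\<le>n. \<gamma> i * B ^ i)"
  shows "\<alpha> = \<gamma>"
proof -
  have "\<forall>i\<le>n. \<alpha> i = \<gamma> i" by (rule digit_expansion_inj[OF assms(3-5)])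
  moreover have "\<forall>i>n. \<alpha> i = 0 \<and> \<gamma> i = 0" using assms(1,2) unfolding multi_idx_def by auto
  ultimately show ?thesis by (metis ext not_le)
qed

lemma finite_multi_idx_total_deg: "finite {\<alpha>\<in>multi_idx n. total_deg n \<alpha> = d}"
proof (rule finite_subset)
  show "{\<alpha>\<in>multi_idx n. total_deg n \<alpha> = d}
      \<subseteq> {f. \<forall>x. (x \<in> {..n} \<longrightarrow> f x \<in> {..d}) \<and> (x \<notin> {..n} \<longrightarrow> f x = 0)}"
  proof (intro subsetI CollectI allI conjI impI)
    fix \<alpha> x assume "\<alpha> \<in> {\<alpha>\<in>multi_idx n. total_deg n \<alpha> = d}"
    then show "x \<in> {..n} \<Longrightarrow> \<alpha> x \<in> {..d}" "x \<notin> {..n} \<Longrightarrow> \<alpha> x = 0"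
      using le_total_deg[of x n \<alpha>] unfolding multi_idx_def by auto
  qed
  show "finite {f. \<forall>x. (x \<in> {..n} \<longrightarrow> f x \<in> {..d}) \<and> (x \<notin> {..n} \<longrightarrow> (f x::nat) = 0)}"
    by (rule finite_set_of_finite_funs) auto
qed

lemma powser_eq_0_on_punctured_disc:
  fixes h :: "nat \<Rightarrow> complex"
  assumes "\<And>t. 0 < norm t \<Longrightarrow> norm t \<le> 1 \<Longrightarrow> (\<lambda>d. h d * t ^ d) sums 0"
  shows "h d = 0"
proof -
  define F where "F t = (\<Sum>d. h d * t ^ d)" for t :: complex
  have s1: "summable (\<lambda>d. h d * 1 ^ d)" using assms[of 1] sums_summable by auto
  have F0: "F t = 0" if "0 < norm t" "norm t \<le> 1" for t
    unfolding F_def using sums_unique[OF assms[OF that]] by simp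
  have h0: "h 0 = 0"
  proof -
    have "isCont F 0" unfolding F_def by (rule isCont_powser[OF s1]) simp
    moreover have "eventually (\<lambda>t. F t = 0) (at (0::complex))"
      unfolding eventually_at by (rule exI[of _ 1]) (auto intro: F0)
    ultimately have "F 0 = 0"
      by (metis isCont_def tendsto_eventually tendsto_unique trivial_limit_at)
    then show ?thesis unfolding F_def by simp
  qed
  show ?thesis
  proof (rule ccontr)
    assume hd: "h d \<noteq> 0"
    with h0 have "d > 0" by (cases d) auto
    have "(\<lambda>k. h k * (x - 0) ^ k) sums F x" if "norm (x - 0) < 1" for x
      unfolding F_def using powser_inside[OF s1] that by (simp add: summable_sums)
    moreover have "F 0 = 0" unfolding F_def using h0 by simp
    ultimately obtain s where s: "0 < s" "\<And>x. x \<in> cball 0 s - {0} \<Longrightarrow> F x \<noteq> 0"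
      using powser_0_nonzero[where r=1 and a=h and \<xi>=0 and f=F, OF _ _ _ hd \<open>d > 0\<close>] by auto
    define x where "x = complex_of_real (min s (1/2))"
    have "x \<in> cball 0 s - {0}" "F x = 0"
      unfolding x_def using s(1) by (auto intro: F0)
    with s(2) show False by blast
  qed
qed

text \<open>Substituting \<open>t z\<close> for \<open>z\<close> turns the series into a one-variable power series
  in \<open>t\<close> whose coefficients are the homogeneous parts.\<close>
lemma homogeneous_part_eq_0:
  assumes "\<And>z. \<forall>i\<le>n. 0 < norm (z i) \<and> norm (z i) < \<delta> \<Longrightarrow>
      ((\<lambda>\<alpha>. P \<alpha> * monomial_val n \<alpha> z) has_sum 0) (multi_idx n)"
    and z: "\<forall>i\<le>n. 0 < norm (z i) \<and> norm (z i) < \<delta>"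
  shows "(\<Sum>\<alpha>\<in>{\<alpha>\<in>multi_idx n. total_deg n \<alpha> = d}. P \<alpha> * monomial_val n \<alpha> z) = 0"
proof -
  let ?M = "multi_idx n"
  define h where "h d = (\<Sum>\<alpha>\<in>{\<alpha>\<in>?M. total_deg n \<alpha> = d}. P \<alpha> * monomial_val n \<alpha> z)" for d
  have "(\<lambda>d. h d * t ^ d) sums 0" if t: "0 < norm t" "norm t \<le> 1" for t :: complex
  proof -
    have "\<forall>i\<le>n. 0 < norm (t * z i) \<and> norm (t * z i) < \<delta>"
      using z t by (auto simp: norm_mult intro: le_less_trans[OF mult_left_le_one_le])
    then have hs: "((\<lambda>\<alpha>. P \<alpha> * monomial_val n \<alpha> (\<lambda>i. t * z i)) has_sum 0) ?M"
      by (rule assms(1))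
    have fibres: "(\<Sum>\<^sub>\<infinity>\<alpha>\<in>{\<alpha>\<in>?M. total_deg n \<alpha> = k}. P \<alpha> * monomial_val n \<alpha> (\<lambda>i. t * z i))
        = h k * t ^ k" for k
    proof -
      have "(\<Sum>\<^sub>\<infinity>\<alpha>\<in>{\<alpha>\<in>?M. total_deg n \<alpha> = k}. P \<alpha> * monomial_val n \<alpha> (\<lambda>i. t * z i))
          = (\<Sum>\<alpha>\<in>{\<alpha>\<in>?M. total_deg n \<alpha> = k}. t ^ k * (P \<alpha> * monomial_val n \<alpha> z))"
        by (simp add: infsum_finite[OF finite_multi_idx_total_deg] monomial_val_scale mult.left_commute)
      then show ?thesis unfolding h_def by (simp add: sum_distrib_left mult.commute)
    qed
    from has_sum_infsum_fibres[OF has_sum_imp_summable[OF hs], of "total_deg n"] infsumI[OF hs]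
    show ?thesis unfolding fibres by (intro has_sum_imp_sums) simp
  qed
  then show ?thesis
    using powser_eq_0_on_punctured_disc[of h d] unfolding h_def by blast
qed

lemma monomial_val_kronecker:
  fixes x \<rho> :: real
  shows "monomial_val n \<alpha> (\<lambda>i. complex_of_real (\<rho> * x ^ (B ^ i)))
       = complex_of_real \<rho> ^ total_deg n \<alpha> * complex_of_real x ^ (\<Sum>i\<le>n. \<alpha> i * B ^ i)"
  unfolding monomial_val_def total_deg_def
  by (simp add: power_mult_distrib power_mult[symmetric] mult.commute prod.distrib power_sum)

lemma poly_eq_0_if_vanishes_on_unit_interval:
  fixes p :: "complex poly"
  assumes "\<And>x. 0 < x \<Longrightarrow> x < 1 \<Longrightarrow> poly p (complex_of_real x) = 0"
  shows "p = 0"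
proof (rule ccontr)
  assume "p \<noteq> 0"
  moreover have "complex_of_real ` {0<..<1} \<subseteq> {t. poly p t = 0}" using assms by auto
  ultimately have "finite (complex_of_real ` {0<..<1})"
    using poly_roots_finite finite_subset by blast
  then have "finite {0<..<(1::real)}"
    by (rule finite_imageD) (simp add: inj_on_def)
  then show False using infinite_Ioo[of "0::real" 1] by simp
qed

text \<open>The substitution \<open>z\<^sub>i = \<rho> x^(B^i)\<close>, with \<open>B\<close> larger than the degree, sends distinct
  monomials of degree \<open>d\<close> to distinct powers of \<open>x\<close>.\<close>
lemma homogeneous_coeff_eq_0:
  assumes "\<delta> > 0"
    and vanish: "\<And>z. \<forall>i\<le>n. 0 < norm (z i) \<and> norm (z i) < \<delta> \<Longrightarrow>
      (\<Sum>\<alpha>\<in>{\<alpha>\<in>multi_idx n. total_deg n \<alpha> = d}. P \<alpha> * monomial_val n \<alpha> z) = 0"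
    and a: "a \<in> multi_idx n" "total_deg n a = d"
  shows "P a = 0"
proof -
  define S where "S = {\<alpha>\<in>multi_idx n. total_deg n \<alpha> = d}"
  define B where "B = Suc d"
  define \<rho> where "\<rho> = \<delta> / 2"
  define e where "e \<alpha> = (\<Sum>i\<le>n. \<alpha> i * B ^ i)" for \<alpha> :: "nat \<Rightarrow> nat"
  define p where "p = (\<Sum>\<alpha>\<in>S. monom (P \<alpha> * complex_of_real \<rho> ^ d) (e \<alpha>))"
  have \<rho>: "0 < \<rho>" "\<rho> < \<delta>" unfolding \<rho>_def using assms(1) by auto
  have "poly p (complex_of_real x) = 0" if x: "0 < x" "x < 1" for x :: real
  proof -
    have "\<forall>i\<le>n. 0 < norm (complex_of_real (\<rho> * x ^ (B ^ i)))
        \<and> norm (complex_of_real (\<rho> * x ^ (B ^ i))) < \<delta>"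
    proof (intro allI impI conjI)
      fix i
      have "0 < x ^ (B ^ i)" "x ^ (B ^ i) \<le> 1" using x by (simp_all add: power_le_one)
      then have "0 < \<rho> * x ^ (B ^ i)" "\<rho> * x ^ (B ^ i) \<le> \<rho>"
        using \<rho> by (simp_all add: mult_left_le_one_le)
      then show "0 < norm (complex_of_real (\<rho> * x ^ (B ^ i)))"
        and "norm (complex_of_real (\<rho> * x ^ (B ^ i))) < \<delta>"
        using \<rho> by (simp_all only: norm_of_real abs_of_pos)
    qed
    from vanish[OF this] have "(\<Sum>\<alpha>\<in>S. P \<alpha> * monomial_val n \<alpha> (\<lambda>i. complex_of_real (\<rho> * x ^ (B ^ i)))) = 0"
      unfolding S_def .
    moreover have "(\<Sum>\<alpha>\<in>S. P \<alpha> * monomial_val n \<alpha> (\<lambda>i. complex_of_real (\<rho> * x ^ (B ^ i))))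
        = poly p (complex_of_real x)"
      unfolding p_def poly_sum poly_monom
    proof (rule sum.cong)
      show "P \<alpha> * monomial_val n \<alpha> (\<lambda>i. complex_of_real (\<rho> * x ^ (B ^ i)))
          = P \<alpha> * complex_of_real \<rho> ^ d * complex_of_real x ^ e \<alpha>" if "\<alpha> \<in> S" for \<alpha>
        using that unfolding monomial_val_kronecker S_def e_def by simp
    qed simp
    ultimately show ?thesis by simp
  qed
  then have "p = 0" by (rule poly_eq_0_if_vanishes_on_unit_interval)
  have digits_lt: "\<forall>i\<le>n. \<alpha> i < B" if "\<alpha> \<in> S" for \<alpha>
    using that le_total_deg[of _ n \<alpha>] unfolding S_def B_def by (auto simp: le_imp_less_Suc)
  have "a \<in> S" unfolding S_def using a by simp
  have "\<alpha> = a" if "\<alpha> \<in> S" "e \<alpha> = e a" for \<alpha>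
    using multi_idx_eq_if_digit_expansion_eq[OF _ _ digits_lt[OF that(1)] digits_lt[OF \<open>a \<in> S\<close>]]
      that \<open>a \<in> S\<close> unfolding S_def e_def by blast
  then have "coeff p (e a) = (\<Sum>\<alpha>\<in>S. if \<alpha> = a then P \<alpha> * complex_of_real \<rho> ^ d else 0)"
    unfolding p_def coeff_sum coeff_monom by (intro sum.cong) auto
  also have "\<dots> = P a * complex_of_real \<rho> ^ d"
    using finite_multi_idx_total_deg a by (simp add: S_def)
  finally have "coeff p (e a) = P a * complex_of_real \<rho> ^ d" .
  with \<open>p = 0\<close> \<rho> show ?thesis by simp
qed

lemma coeff_eq_0_if_ps_vanishes:
  assumes "\<delta> > 0"
    and "\<And>z. \<forall>i\<le>n. 0 < norm (z i) \<and> norm (z i) < \<delta> \<Longrightarrow>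
      ((\<lambda>\<alpha>. P \<alpha> * monomial_val n \<alpha> z) has_sum 0) (multi_idx n)"
    and "\<alpha> \<in> multi_idx n"
  shows "P \<alpha> = 0"
proof (rule homogeneous_coeff_eq_0[OF assms(1) _ assms(3) refl])
  fix z :: "nat \<Rightarrow> complex"
  assume "\<forall>i\<le>n. 0 < norm (z i) \<and> norm (z i) < \<delta>"
  then show "(\<Sum>\<beta>\<in>{\<beta>\<in>multi_idx n. total_deg n \<beta> = total_deg n \<alpha>}. P \<beta> * monomial_val n \<beta> z) = 0"
    using homogeneous_part_eq_0[OF assms(2)] by blast
qed

lemma conv_ps_eq_0_if_ps_eval_vanishes:
  assumes "P \<in> conv_ps n" "\<delta> > 0" "\<And>z. \<forall>i\<le>n. norm (z i) < \<delta> \<Longrightarrow> ps_eval n P z = 0"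
  shows "P = (\<lambda>_. 0)"
proof -
  obtain r where r: "r > 0" "abs_summable_ps n P r" using assms(1) by (rule conv_psE)
  have "P \<alpha> = 0" if "\<alpha> \<in> multi_idx n" for \<alpha>
  proof (rule coeff_eq_0_if_ps_vanishes[of "min \<delta> r", OF _ _ that])
    show "min \<delta> r > 0" using assms(2) r(1) by simp
    fix z :: "nat \<Rightarrow> complex"
    assume z: "\<forall>i\<le>n. 0 < norm (z i) \<and> norm (z i) < min \<delta> r"
    then have "\<forall>i\<le>n. norm (z i) \<le> r" by (simp add: less_imp_le)
    from has_sum_ps_eval[OF r(2) this] assms(3)[of z] z
    show "((\<lambda>\<alpha>. P \<alpha> * monomial_val n \<alpha> z) has_sum 0) (multi_idx n)" by simp
  qed
  with assms(1) show ?thesis unfolding conv_ps_iff by auto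
qed

section \<open>Residue-free and special equations for \<open>f = (x\<^sub>2 - x x\<^sub>1)\<^sup>2\<close>\<close>

definition f_sq :: "(nat \<Rightarrow> complex) \<Rightarrow> complex" where
  "f_sq z = (z 2 - z 0 * z 1) ^ 2"

definition free_of_x012 :: "((nat \<Rightarrow> nat) \<Rightarrow> complex) \<Rightarrow> bool" where
  "free_of_x012 P \<longleftrightarrow> (\<forall>\<alpha>. P \<alpha> \<noteq> 0 \<longrightarrow> \<alpha> 0 = 0 \<and> \<alpha> 1 = 0 \<and> \<alpha> 2 = 0)"

definition Dx_vanishes_on_zero_set :: "nat \<Rightarrow> ((nat \<Rightarrow> nat) \<Rightarrow> complex) \<Rightarrow> bool" where
  "Dx_vanishes_on_zero_set n P \<longleftrightarrow> (\<exists>\<epsilon>>0. \<forall>z. polydisc n \<epsilon> z \<longrightarrow> z 2 = z 0 * z 1 \<longrightarrow> z 1 \<noteq> 0 \<longrightarrow>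
      ps_eval n (Dx P) z = 0)"

lemma f_sq_upd_0: "f_sq (z(0 := t)) = (z 2 - t * z 1)^2"
  unfolding f_sq_def by simp

lemma conv_ps_rest_iff: "c \<in> conv_ps_rest n \<longleftrightarrow> c \<in> conv_ps n \<and> free_of_x012 c"
  unfolding conv_ps_rest_def free_of_x012_def by blast

lemma ps_eval_free_of_x012:
  assumes "free_of_x012 P" "\<forall>i. i \<noteq> 0 \<and> i \<noteq> 1 \<and> i \<noteq> 2 \<longrightarrow> w i = w' i"
  shows "ps_eval n P w = ps_eval n P w'"
  unfolding ps_eval_def
proof (rule infsum_cong)
  fix \<alpha>
  show "P \<alpha> * monomial_val n \<alpha> w = P \<alpha> * monomial_val n \<alpha> w'"
  proof (cases "P \<alpha> = 0")
    case False
    with assms(1) have "\<alpha> 0 = 0" "\<alpha> 1 = 0" "\<alpha> 2 = 0" unfolding free_of_x012_def by auto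
    with assms(2) have "w i ^ \<alpha> i = w' i ^ \<alpha> i" for i
      by (cases "i = 0 \<or> i = 1 \<or> i = 2") auto
    then show ?thesis unfolding monomial_val_def by simp
  qed simp
qed

lemma Dx_free_of_x012: "free_of_x012 P \<Longrightarrow> Dx P = (\<lambda>_. 0)"
  unfolding free_of_x012_def Dx_def by (auto simp: fun_eq_iff)

lemma free_of_x012_diff:
  assumes "free_of_x012 c" "free_of_x012 d"
  shows "free_of_x012 (c - d)"
  unfolding free_of_x012_def
proof (intro allI impI)
  fix \<alpha> assume "(c - d) \<alpha> \<noteq> 0"
  then have "c \<alpha> \<noteq> 0 \<or> d \<alpha> \<noteq> 0" by auto
  then show "\<alpha> 0 = 0 \<and> \<alpha> 1 = 0 \<and> \<alpha> 2 = 0" using assms unfolding free_of_x012_def by blast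
qed

lemma ex_f_sq_upd_0_neq_0_iff:
  assumes "z 2 = z 0 * z 1"
  shows "(\<exists>t. f_sq (z(0 := t)) \<noteq> 0) \<longleftrightarrow> z 1 \<noteq> 0"
proof
  assume "\<exists>t. f_sq (z(0 := t)) \<noteq> 0"
  then show "z 1 \<noteq> 0" using assms unfolding f_sq_upd_0 by auto
next
  assume "z 1 \<noteq> 0"
  then have "f_sq (z(0 := z 0 + 1)) \<noteq> 0" using assms unfolding f_sq_upd_0 by (simp add: algebra_simps)
  then show "\<exists>t. f_sq (z(0 := t)) \<noteq> 0" by blast
qed

lemma Fr_f_sq_iff: "P \<in> Fr n f_sq \<longleftrightarrow> P \<in> conv_ps n \<and> Dx_vanishes_on_zero_set n P"
proof (cases "P \<in> conv_ps n")
  case True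
  then obtain r where r: "r > 0" "abs_summable_ps n P r" by (rule conv_psE)
  have residue: "residue (\<lambda>t. ps_eval n P (z(0 := t)) / f_sq (z(0 := t))) (z 0)
      = ps_eval n (Dx P) z / (z 1)^2"
    if "polydisc n (r/2) z" "z 2 = z 0 * z 1" for z
    unfolding f_sq_upd_0 using that
    by (intro residue_ps_eval_over_square[OF r(2,1)]) (auto simp: polydisc_def)
  have polydisc_min: "polydisc n (min \<epsilon> (r/2)) z \<longleftrightarrow> polydisc n \<epsilon> z \<and> polydisc n (r/2) z"
    for \<epsilon> z
    unfolding polydisc_def by auto
  have "(\<exists>\<epsilon>>0. \<forall>z. polydisc n \<epsilon> z \<longrightarrow> f_sq z = 0 \<longrightarrow> (\<exists>t. f_sq (z(0 := t)) \<noteq> 0) \<longrightarrow>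
          residue (\<lambda>t. ps_eval n P (z(0 := t)) / f_sq (z(0 := t))) (z 0) = 0)
      \<longleftrightarrow> Dx_vanishes_on_zero_set n P"
    unfolding Dx_vanishes_on_zero_set_def
  proof (intro iffI; elim exE conjE)
    fix \<epsilon> :: real
    assume "\<epsilon> > 0" and H: "\<forall>z. polydisc n \<epsilon> z \<longrightarrow> f_sq z = 0 \<longrightarrow> (\<exists>t. f_sq (z(0 := t)) \<noteq> 0) \<longrightarrow>
      residue (\<lambda>t. ps_eval n P (z(0 := t)) / f_sq (z(0 := t))) (z 0) = 0"
    have "ps_eval n (Dx P) z = 0"
      if "polydisc n (min \<epsilon> (r/2)) z" "z 2 = z 0 * z 1" "z 1 \<noteq> 0" for z
    proof -
      have "f_sq z = 0" using that(2) unfolding f_sq_def by simp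
      with H that ex_f_sq_upd_0_neq_0_iff[OF that(2)] residue[OF _ that(2)]
      have "ps_eval n (Dx P) z / (z 1)^2 = 0" unfolding polydisc_min by metis
      with that(3) show ?thesis by simp
    qed
    then show "\<exists>\<epsilon>>0. \<forall>z. polydisc n \<epsilon> z \<longrightarrow> z 2 = z 0 * z 1 \<longrightarrow> z 1 \<noteq> 0 \<longrightarrow> ps_eval n (Dx P) z = 0"
      using \<open>\<epsilon> > 0\<close> r(1) by (intro exI[of _ "min \<epsilon> (r/2)"]) simp
  next
    fix \<epsilon> :: real
    assume "\<epsilon> > 0" and H: "\<forall>z. polydisc n \<epsilon> z \<longrightarrow> z 2 = z 0 * z 1 \<longrightarrow> z 1 \<noteq> 0 \<longrightarrow>
      ps_eval n (Dx P) z = 0"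
    have "residue (\<lambda>t. ps_eval n P (z(0 := t)) / f_sq (z(0 := t))) (z 0) = 0"
      if "polydisc n (min \<epsilon> (r/2)) z" "f_sq z = 0" "\<exists>t. f_sq (z(0 := t)) \<noteq> 0" for z
    proof -
      have "z 2 = z 0 * z 1" using that(2) unfolding f_sq_def by simp
      with H that ex_f_sq_upd_0_neq_0_iff[of z] residue[of z] show ?thesis
        unfolding polydisc_min by simp
    qed
    then show "\<exists>\<epsilon>>0. \<forall>z. polydisc n \<epsilon> z \<longrightarrow> f_sq z = 0 \<longrightarrow> (\<exists>t. f_sq (z(0 := t)) \<noteq> 0) \<longrightarrow>
      residue (\<lambda>t. ps_eval n P (z(0 := t)) / f_sq (z(0 := t))) (z 0) = 0"
      using \<open>\<epsilon> > 0\<close> r(1) by (intro exI[of _ "min \<epsilon> (r/2)"]) simp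
  qed
  with True show ?thesis unfolding Fr_def by blast
qed (simp add: Fr_def)

lemma conv_ps_rest_subset_Fr: "conv_ps_rest n \<subseteq> Fr n f_sq"
proof
  fix c assume "c \<in> conv_ps_rest n"
  then have "c \<in> conv_ps n" "Dx c = (\<lambda>_. 0)"
    unfolding conv_ps_rest_iff by (auto simp: Dx_free_of_x012)
  moreover have "ps_eval n (\<lambda>_. 0) z = 0" for z unfolding ps_eval_def by simp
  ultimately show "c \<in> Fr n f_sq"
    unfolding Fr_f_sq_iff Dx_vanishes_on_zero_set_def by (auto intro: exI[of _ 1])
qed

lemma has_field_derivative_ps_eval_over_f1:
  assumes "abs_summable_ps n \<beta> r" "r > 0" "\<forall>i\<le>n. norm (z i) < r/2" "f_sq z \<noteq> 0"
  shows "((\<lambda>t. ps_eval n \<beta> (z(0 := t)) / (z 2 - t * z 1)) has_field_derivative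
      (ps_eval n (Dx \<beta>) z * (z 2 - z 0 * z 1) + z 1 * ps_eval n \<beta> z) / f_sq z) (at (z 0))"
proof -
  have f1: "z 2 - z 0 * z 1 \<noteq> 0" using assms(4) unfolding f_sq_def by simp
  have "((\<lambda>t. z 2 - t * z 1) has_field_derivative - z 1) (at (z 0))"
    by (auto intro!: derivative_eq_intros)
  from DERIV_divide[OF has_field_derivative_ps_eval[OF assms(1-3)] this f1] show ?thesis
    unfolding f_sq_def by (simp add: power2_eq_square algebra_simps)
qed

lemma has_field_derivative_over_f1_iff:
  assumes "abs_summable_ps n \<beta> r" "r > 0" "\<forall>i\<le>n. norm (z i) < r/2" "f_sq z \<noteq> 0"
  shows "((\<lambda>t. ps_eval n \<beta> (z(0 := t)) / (z 2 - t * z 1)) has_field_derivative ps_eval n A z / f_sq z)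
      (at (z 0))
    \<longleftrightarrow> ps_eval n A z = ps_eval n (Dx \<beta>) z * (z 2 - z 0 * z 1) + z 1 * ps_eval n \<beta> z"
proof
  assume "((\<lambda>t. ps_eval n \<beta> (z(0 := t)) / (z 2 - t * z 1)) has_field_derivative ps_eval n A z / f_sq z)
    (at (z 0))"
  from DERIV_unique[OF this has_field_derivative_ps_eval_over_f1[OF assms]] assms(4)
  show "ps_eval n A z = ps_eval n (Dx \<beta>) z * (z 2 - z 0 * z 1) + z 1 * ps_eval n \<beta> z" by simp
next
  assume "ps_eval n A z = ps_eval n (Dx \<beta>) z * (z 2 - z 0 * z 1) + z 1 * ps_eval n \<beta> z"
  with has_field_derivative_ps_eval_over_f1[OF assms]
  show "((\<lambda>t. ps_eval n \<beta> (z(0 := t)) / (z 2 - t * z 1)) has_field_derivative ps_eval n A z / f_sq z)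
    (at (z 0))" by simp
qed

lemma eq_0_if_norm_le_linear:
  fixes E :: "'a::real_normed_vector"
  assumes "\<delta> > 0" "\<And>s. 0 < s \<Longrightarrow> s < \<delta> \<Longrightarrow> norm E \<le> M * s"
  shows "E = 0"
proof -
  have "norm E \<le> 0"
  proof (rule tendsto_lowerbound)
    show "((\<lambda>s. M * s) \<longlongrightarrow> 0) (at_right 0)" by (auto intro!: tendsto_eq_intros)
    show "\<forall>\<^sub>F s in at_right 0. norm E \<le> M * s"
      unfolding eventually_at_right_field using assms by blast
  qed simp
  then show ?thesis by simp
qed

lemma free_of_x012_Sp_eq_0:
  assumes "e \<in> Sp n f_sq" "free_of_x012 e"
  shows "e = (\<lambda>_. 0)"
proof -
  from assms(1) have e: "e \<in> conv_ps n" unfolding Sp_def Fr_def by blast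
  obtain \<beta> \<epsilon> where "\<beta> \<in> conv_ps n" "\<epsilon> > 0" and solution: "\<And>z. polydisc n \<epsilon> z \<Longrightarrow> f_sq z \<noteq> 0 \<Longrightarrow>
      ((\<lambda>t. ps_eval n \<beta> (z(0 := t)) / (z 2 - t * z 1)) has_field_derivative (ps_eval n e z / f_sq z))
        (at (z 0))"
    using assms(1) unfolding Sp_def by blast
  then obtain rb where rb: "rb > 0" "abs_summable_ps n \<beta> rb" by (metis conv_psE)
  define \<delta> where "\<delta> = min \<epsilon> (rb/2)"
  define M where "M = majorant n (Dx \<beta>) (rb/2)"
  have \<delta>: "\<delta> > 0" "\<delta> \<le> \<epsilon>" "\<delta> \<le> rb/2"
    unfolding \<delta>_def using \<open>\<epsilon> > 0\<close> rb by auto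
  have bound: "norm (ps_eval n e z) \<le> M * s"
    if z: "\<forall>i\<le>n. norm (z i) < \<delta>" and s: "0 < s" "s < \<delta>" for z s
  proof -
    define w where "w = z(1 := 0, 2 := complex_of_real s)"
    have w_small: "\<forall>i\<le>n. norm (w i) < \<delta>" using z s unfolding w_def by auto
    have fw: "f_sq w \<noteq> 0" unfolding f_sq_def w_def using s by auto
    have "polydisc n \<epsilon> w" using w_small \<delta> unfolding polydisc_def by force
    moreover have "\<forall>i\<le>n. norm (w i) < rb/2" using w_small \<delta> by force
    ultimately have "ps_eval n e w = ps_eval n (Dx \<beta>) w * (w 2 - w 0 * w 1) + w 1 * ps_eval n \<beta> w"
      using solution has_field_derivative_over_f1_iff[OF rb(2,1)] fw by blast
    then have "ps_eval n e w = ps_eval n (Dx \<beta>) w * complex_of_real s"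
      unfolding w_def by simp
    moreover have "ps_eval n e w = ps_eval n e z"
      by (rule ps_eval_free_of_x012[OF assms(2)]) (simp add: w_def)
    moreover have "norm (ps_eval n (Dx \<beta>) w) \<le> M"
      unfolding M_def using w_small \<delta>
      by (intro norm_ps_eval_le_majorant[OF abs_summable_ps_Dx[OF rb(2,1)]]) force
    ultimately show ?thesis using s by (simp add: norm_mult mult_right_mono)
  qed
  show ?thesis
  proof (rule conv_ps_eq_0_if_ps_eval_vanishes[OF e \<delta>(1)])
    fix z :: "nat \<Rightarrow> complex"
    assume "\<forall>i\<le>n. norm (z i) < \<delta>"
    from bound[OF this] show "ps_eval n e z = 0" by (rule eq_0_if_norm_le_linear[OF \<delta>(1)])
  qed
qed

section \<open>Restriction to \<open>x\<^sub>2 = x x\<^sub>1\<close>\<close>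

definition set012 :: "(nat \<Rightarrow> nat) \<Rightarrow> nat \<Rightarrow> nat \<Rightarrow> nat \<Rightarrow> nat \<Rightarrow> nat" where
  "set012 \<alpha> k a b = \<alpha>(0 := k, 1 := a, 2 := b)"

lemma set012_apply [simp]:
  "set012 \<alpha> k a b 0 = k" "set012 \<alpha> k a b (Suc 0) = a" "set012 \<alpha> k a b 2 = b"
  "i \<noteq> 0 \<Longrightarrow> i \<noteq> 1 \<Longrightarrow> i \<noteq> 2 \<Longrightarrow> set012 \<alpha> k a b i = \<alpha> i"
  unfolding set012_def by auto

lemma set012_set012 [simp]: "set012 (set012 \<alpha> k a b) k' a' b' = set012 \<alpha> k' a' b'"
  unfolding set012_def by (auto simp: fun_eq_iff)

lemma set012_self: "\<alpha> 0 = k \<Longrightarrow> \<alpha> 1 = a \<Longrightarrow> \<alpha> 2 = b \<Longrightarrow> set012 \<alpha> k a b = \<alpha>"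
  unfolding set012_def by (auto simp: fun_eq_iff)

lemma upd_eq_set012:
  "\<alpha>(0 := x) = set012 \<alpha> x (\<alpha> 1) (\<alpha> 2)"
  "\<alpha>(Suc 0 := x) = set012 \<alpha> (\<alpha> 0) x (\<alpha> 2)"
  "\<alpha>(2 := x) = set012 \<alpha> (\<alpha> 0) (\<alpha> 1) x"
  unfolding set012_def by (auto simp: fun_eq_iff)

lemma set012_in_multi_idx: "\<alpha> \<in> multi_idx n \<Longrightarrow> 2 \<le> n \<Longrightarrow> set012 \<alpha> k a b \<in> multi_idx n"
  unfolding set012_def multi_idx_def by auto

lemma total_deg_set012:
  assumes "2 \<le> n"
  shows "total_deg n (set012 \<alpha> k a b) + (\<alpha> 0 + \<alpha> 1 + \<alpha> 2) = total_deg n \<alpha> + (k + a + b)"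
proof -
  have "total_deg n (\<alpha>(0 := k)) + \<alpha> 0 = total_deg n \<alpha> + k"
    "total_deg n (\<alpha>(0 := k, 1 := a)) + (\<alpha>(0 := k)) 1 = total_deg n (\<alpha>(0 := k)) + a"
    "total_deg n (\<alpha>(0 := k, 1 := a, 2 := b)) + (\<alpha>(0 := k, 1 := a)) 2
      = total_deg n (\<alpha>(0 := k, 1 := a)) + b"
    using assms by (intro total_deg_upd; simp)+
  then show ?thesis unfolding set012_def by simp
qed

lemma monomial_val_split012:
  assumes "2 \<le> n"
  shows "monomial_val n \<alpha> z = z 0 ^ \<alpha> 0 * z 1 ^ \<alpha> 1 * z 2 ^ \<alpha> 2 * (\<Prod>i\<in>{3..n}. z i ^ \<alpha> i)"
proof -
  have "{..n} = insert 0 (insert 1 (insert 2 {3..n}))" using assms by auto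
  then show ?thesis unfolding monomial_val_def by (simp add: mult_ac)
qed

text \<open>\<open>subst_coeff D\<close> are the coefficients of the series \<open>D\<close> after the substitution
  \<open>x\<^sub>2 = x x\<^sub>1\<close>, which maps exponents by \<open>subst_exp\<close>.\<close>
definition subst_exp :: "(nat \<Rightarrow> nat) \<Rightarrow> nat \<Rightarrow> nat" where
  "subst_exp \<alpha> = set012 \<alpha> (\<alpha> 0 + \<alpha> 2) (\<alpha> 1 + \<alpha> 2) 0"

definition subst_coeff :: "((nat \<Rightarrow> nat) \<Rightarrow> complex) \<Rightarrow> (nat \<Rightarrow> nat) \<Rightarrow> complex" where
  "subst_coeff D \<beta> =
    (if \<beta> 2 = 0 then (\<Sum>b\<le>min (\<beta> 0) (\<beta> 1). D (set012 \<beta> (\<beta> 0 - b) (\<beta> 1 - b) b)) else 0)"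

lemma monomial_val_subst:
  assumes "2 \<le> n"
  shows "monomial_val n \<alpha> (w(2 := w 0 * w 1)) = monomial_val n (subst_exp \<alpha>) w"
proof -
  have "(\<Prod>i\<in>{3..n}. (w(2 := w 0 * w 1)) i ^ \<alpha> i) = (\<Prod>i\<in>{3..n}. w i ^ subst_exp \<alpha> i)"
    by (rule prod.cong) (auto simp: subst_exp_def)
  then show ?thesis
    unfolding monomial_val_split012[OF assms, of \<alpha>] monomial_val_split012[OF assms, of "subst_exp \<alpha>"]
    by (simp add: subst_exp_def power_add power_mult_distrib mult_ac)
qed

lemma subst_exp_fibre:
  assumes "2 \<le> n" "\<beta> \<in> multi_idx n" "\<beta> 2 = 0"
  shows "{\<alpha>\<in>multi_idx n. subst_exp \<alpha> = \<beta>}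
      = (\<lambda>b. set012 \<beta> (\<beta> 0 - b) (\<beta> 1 - b) b) ` {..min (\<beta> 0) (\<beta> 1)}"
proof (intro equalityI subsetI)
  fix \<alpha> assume "\<alpha> \<in> {\<alpha>\<in>multi_idx n. subst_exp \<alpha> = \<beta>}"
  then have "\<beta> 0 = \<alpha> 0 + \<alpha> 2" "\<beta> 1 = \<alpha> 1 + \<alpha> 2" "\<And>i. i \<noteq> 0 \<Longrightarrow> i \<noteq> 1 \<Longrightarrow> i \<noteq> 2 \<Longrightarrow> \<beta> i = \<alpha> i"
    unfolding subst_exp_def by auto
  then have "\<alpha> = set012 \<beta> (\<beta> 0 - \<alpha> 2) (\<beta> 1 - \<alpha> 2) (\<alpha> 2)" "\<alpha> 2 \<le> min (\<beta> 0) (\<beta> 1)"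
    by (auto simp: fun_eq_iff set012_def)
  then show "\<alpha> \<in> (\<lambda>b. set012 \<beta> (\<beta> 0 - b) (\<beta> 1 - b) b) ` {..min (\<beta> 0) (\<beta> 1)}" by blast
next
  fix \<alpha> assume "\<alpha> \<in> (\<lambda>b. set012 \<beta> (\<beta> 0 - b) (\<beta> 1 - b) b) ` {..min (\<beta> 0) (\<beta> 1)}"
  then obtain b where "b \<le> min (\<beta> 0) (\<beta> 1)" "\<alpha> = set012 \<beta> (\<beta> 0 - b) (\<beta> 1 - b) b" by auto
  then show "\<alpha> \<in> {\<alpha>\<in>multi_idx n. subst_exp \<alpha> = \<beta>}"
    using assms by (simp add: subst_exp_def set012_in_multi_idx set012_self)
qed

lemma subst_exp_fibre_empty:
  assumes "2 \<le> n" "\<beta> \<notin> multi_idx n \<or> \<beta> 2 \<noteq> 0"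
  shows "{\<alpha>\<in>multi_idx n. subst_exp \<alpha> = \<beta>} = {}"
  using assms set012_in_multi_idx[OF _ assms(1)] unfolding subst_exp_def by auto

lemma has_sum_subst_coeff:
  assumes n: "2 \<le> n"
    and summable: "(\<lambda>\<alpha>. D \<alpha> * monomial_val n \<alpha> (w(2 := w 0 * w 1))) summable_on multi_idx n"
  shows "((\<lambda>\<beta>. subst_coeff D \<beta> * monomial_val n \<beta> w) has_sum ps_eval n D (w(2 := w 0 * w 1)))
    (multi_idx n)"
proof -
  let ?M = "multi_idx n"
  let ?g = "\<lambda>\<alpha>. D \<alpha> * monomial_val n \<alpha> (w(2 := w 0 * w 1))"
  have fibre_sum: "(\<Sum>\<^sub>\<infinity>\<alpha>\<in>{\<alpha>\<in>?M. subst_exp \<alpha> = \<beta>}. ?g \<alpha>)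
      = (if \<beta> \<in> ?M then subst_coeff D \<beta> * monomial_val n \<beta> w else 0)" for \<beta>
  proof (cases "\<beta> \<in> ?M \<and> \<beta> 2 = 0")
    case True
    let ?p = "\<lambda>b. set012 \<beta> (\<beta> 0 - b) (\<beta> 1 - b) b"
    have "inj_on ?p {..min (\<beta> 0) (\<beta> 1)}"
      by (rule inj_onI) (metis set012_apply(3))
    then have "(\<Sum>\<^sub>\<infinity>\<alpha>\<in>{\<alpha>\<in>?M. subst_exp \<alpha> = \<beta>}. ?g \<alpha>) = (\<Sum>b\<le>min (\<beta> 0) (\<beta> 1). ?g (?p b))"
      using True by (simp add: subst_exp_fibre[OF n] sum.reindex)
    also have "\<dots> = (\<Sum>b\<le>min (\<beta> 0) (\<beta> 1). D (?p b) * monomial_val n \<beta> w)"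
    proof (rule sum.cong)
      fix b assume "b \<in> {..min (\<beta> 0) (\<beta> 1)}"
      then have "subst_exp (?p b) = \<beta>" using True by (simp add: subst_exp_def set012_self)
      then show "?g (?p b) = D (?p b) * monomial_val n \<beta> w" unfolding monomial_val_subst[OF n] by simp
    qed simp
    finally show ?thesis
      using True unfolding subst_coeff_def by (simp add: sum_distrib_right)
  next
    case False
    then have empty: "{\<alpha>\<in>?M. subst_exp \<alpha> = \<beta>} = {}" by (intro subst_exp_fibre_empty[OF n]) auto
    show ?thesis using False unfolding empty subst_coeff_def by auto
  qed
  have "((\<lambda>\<beta>. if \<beta> \<in> ?M then subst_coeff D \<beta> * monomial_val n \<beta> w else 0)
      has_sum ps_eval n D (w(2 := w 0 * w 1))) UNIV"
    using has_sum_infsum_fibres[OF summable, of subst_exp] unfolding fibre_sum ps_eval_def .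
  then show ?thesis
    by (subst (asm) has_sum_cong_neutral[where T="?M"]) auto
qed

lemma Fr_imp_subst_coeff_Dx_eq_0:
  assumes n: "2 \<le> n" and "A \<in> Fr n f_sq" "\<beta> \<in> multi_idx n"
  shows "subst_coeff (Dx A) \<beta> = 0"
proof -
  have "A \<in> conv_ps n" and "Dx_vanishes_on_zero_set n A"
    using assms(2) unfolding Fr_f_sq_iff by auto
  then obtain r \<epsilon> where r: "r > 0" "abs_summable_ps n A r" and "\<epsilon> > 0"
    and H: "\<And>z. polydisc n \<epsilon> z \<Longrightarrow> z 2 = z 0 * z 1 \<Longrightarrow> z 1 \<noteq> 0 \<Longrightarrow> ps_eval n (Dx A) z = 0"
    unfolding Dx_vanishes_on_zero_set_def by (metis conv_psE)
  define \<delta> where "\<delta> = min (min \<epsilon> (r/2)) 1"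
  have \<delta>: "\<delta> > 0" "\<delta> \<le> \<epsilon>" "\<delta> \<le> r/2" "\<delta> \<le> 1"
    unfolding \<delta>_def using \<open>\<epsilon> > 0\<close> r by auto
  show ?thesis
  proof (rule coeff_eq_0_if_ps_vanishes[OF \<delta>(1) _ assms(3)])
    fix w :: "nat \<Rightarrow> complex"
    assume w: "\<forall>i\<le>n. 0 < norm (w i) \<and> norm (w i) < \<delta>"
    define z where "z = w(2 := w 0 * w 1)"
    have "norm (w 0) < \<delta>" "0 < norm (w 1)" "norm (w 1) < \<delta>" using w n by auto
    then have "norm (w 0) < \<delta>" "norm (w 1) \<le> 1" "w 1 \<noteq> 0" using \<delta>(4) by auto
    then have "norm (w 0 * w 1) < \<delta>"
      by (simp add: norm_mult) (metis le_less_trans mult_left_le norm_ge_zero)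
    then have z_small: "\<forall>i\<le>n. norm (z i) < \<delta>" unfolding z_def using w by auto
    have "ps_eval n (Dx A) z = 0"
      using z_small \<delta> \<open>w 1 \<noteq> 0\<close> unfolding z_def polydisc_def
      by (intro H) (force simp: polydisc_def)+
    moreover have "(\<lambda>\<alpha>. Dx A \<alpha> * monomial_val n \<alpha> z) summable_on multi_idx n"
      using has_sum_ps_eval[OF abs_summable_ps_Dx[OF r(2,1)]] z_small \<delta>
      by (meson has_sum_imp_summable less_imp_le order.strict_trans2)
    ultimately show "((\<lambda>\<alpha>. subst_coeff (Dx A) \<alpha> * monomial_val n \<alpha> w) has_sum 0) (multi_idx n)"
      using has_sum_subst_coeff[OF n, of "Dx A" w] unfolding z_def by simp
  qed
qed

section \<open>Solving the homological equation\<close>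

definition mul_var :: "nat \<Rightarrow> ((nat \<Rightarrow> nat) \<Rightarrow> complex) \<Rightarrow> (nat \<Rightarrow> nat) \<Rightarrow> complex" where
  "mul_var i P \<alpha> = (if 1 \<le> \<alpha> i then P (\<alpha>(i := \<alpha> i - 1)) else 0)"

lemma monomial_val_incr:
  assumes "i \<le> n"
  shows "monomial_val n (\<alpha>(i := \<alpha> i + 1)) z = z i * monomial_val n \<alpha> z"
  using monomial_val_upd[OF assms, of "\<alpha>(i := \<alpha> i + 1)" z "z i"] monomial_val_upd[OF assms, of \<alpha> z "z i"]
  by (simp add: fun_upd_idem_iff)

lemma has_sum_mul_var:
  assumes "i \<le> n" "((\<lambda>\<alpha>. P \<alpha> * monomial_val n \<alpha> z) has_sum S) (multi_idx n)"
  shows "((\<lambda>\<alpha>. mul_var i P \<alpha> * monomial_val n \<alpha> z) has_sum (z i * S)) (multi_idx n)"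
proof -
  let ?M = "multi_idx n"
  let ?h = "\<lambda>\<alpha>::nat\<Rightarrow>nat. \<alpha>(i := \<alpha> i + 1)"
  let ?g = "\<lambda>\<alpha>. mul_var i P \<alpha> * monomial_val n \<alpha> z"
  have inj: "inj_on ?h ?M"
    by (rule inj_onI) (metis add_right_cancel fun_upd_same fun_upd_idem_iff fun_upd_upd)
  have "?g \<circ> ?h = (\<lambda>\<alpha>. z i * (P \<alpha> * monomial_val n \<alpha> z))"
  proof
    fix \<alpha>
    have "mul_var i P (?h \<alpha>) = P \<alpha>" unfolding mul_var_def by simp
    then show "(?g \<circ> ?h) \<alpha> = z i * (P \<alpha> * monomial_val n \<alpha> z)"
      unfolding o_def monomial_val_incr[OF assms(1)] by simp
  qed
  then have "((?g \<circ> ?h) has_sum (z i * S)) ?M" using has_sum_cmult_right[OF assms(2)] by simp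
  then have "(?g has_sum (z i * S)) (?h ` ?M)" using has_sum_reindex[OF inj] by blast
  moreover have "?h ` ?M = {\<alpha>\<in>?M. 1 \<le> \<alpha> i}"
  proof
    show "?h ` ?M \<subseteq> {\<alpha>\<in>?M. 1 \<le> \<alpha> i}" using assms(1) by (auto intro: multi_idx_upd)
    show "{\<alpha>\<in>?M. 1 \<le> \<alpha> i} \<subseteq> ?h ` ?M"
    proof
      fix \<alpha> assume "\<alpha> \<in> {\<alpha>\<in>?M. 1 \<le> \<alpha> i}"
      then have "\<alpha> = ?h (\<alpha>(i := \<alpha> i - 1))" "\<alpha>(i := \<alpha> i - 1) \<in> ?M"
        using assms(1) by (auto simp: fun_eq_iff intro: multi_idx_upd)
      then show "\<alpha> \<in> ?h ` ?M" by blast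
    qed
  qed
  ultimately show ?thesis
    by (subst (asm) has_sum_cong_neutral[of _ _ ?g]) (auto simp: mul_var_def)
qed

text \<open>The coefficients of \<open>(x\<^sub>2 - x x\<^sub>1) \<partial>\<^sub>x\<beta> + x\<^sub>1 \<beta>\<close>, the numerator of
  \<open>\<partial>\<^sub>x (\<beta> / (x\<^sub>2 - x x\<^sub>1))\<close> over \<open>f\<close>.\<close>
definition homological_op :: "((nat \<Rightarrow> nat) \<Rightarrow> complex) \<Rightarrow> (nat \<Rightarrow> nat) \<Rightarrow> complex" where
  "homological_op \<beta> \<alpha> = mul_var 2 (Dx \<beta>) \<alpha> - mul_var 0 (mul_var 1 (Dx \<beta>)) \<alpha> + mul_var 1 \<beta> \<alpha>"

lemma homological_op_coeff:
  "homological_op \<beta> \<alpha> =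
     (if 1 \<le> \<alpha> 2 then of_nat (\<alpha> 0 + 1) * \<beta> (set012 \<alpha> (\<alpha> 0 + 1) (\<alpha> 1) (\<alpha> 2 - 1)) else 0)
   + (if 1 \<le> \<alpha> 1 then (1 - of_nat (\<alpha> 0)) * \<beta> (set012 \<alpha> (\<alpha> 0) (\<alpha> 1 - 1) (\<alpha> 2)) else 0)"
  unfolding homological_op_def mul_var_def Dx_def by (simp add: upd_eq_set012 algebra_simps)

lemma has_sum_homological_op:
  assumes n: "2 \<le> n" and \<beta>: "abs_summable_ps n \<beta> r" "r > 0" and z: "\<forall>i\<le>n. norm (z i) \<le> r/2"
  shows "((\<lambda>\<alpha>. homological_op \<beta> \<alpha> * monomial_val n \<alpha> z) has_sum
      (ps_eval n (Dx \<beta>) z * (z 2 - z 0 * z 1) + z 1 * ps_eval n \<beta> z)) (multi_idx n)"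
proof -
  have "\<forall>i\<le>n. norm (z i) \<le> r" using z \<beta>(2) by force
  from has_sum_ps_eval[OF \<beta>(1) this]
  have hs: "((\<lambda>\<alpha>. \<beta> \<alpha> * monomial_val n \<alpha> z) has_sum ps_eval n \<beta> z) (multi_idx n)" .
  from has_sum_ps_eval[OF abs_summable_ps_Dx[OF \<beta>] z]
  have hs': "((\<lambda>\<alpha>. Dx \<beta> \<alpha> * monomial_val n \<alpha> z) has_sum ps_eval n (Dx \<beta>) z) (multi_idx n)" .
  have "((\<lambda>\<alpha>. mul_var 2 (Dx \<beta>) \<alpha> * monomial_val n \<alpha> z
      + - (mul_var 0 (mul_var 1 (Dx \<beta>)) \<alpha> * monomial_val n \<alpha> z)
      + mul_var 1 \<beta> \<alpha> * monomial_val n \<alpha> z)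
      has_sum (z 2 * ps_eval n (Dx \<beta>) z + - (z 0 * (z 1 * ps_eval n (Dx \<beta>) z)) + z 1 * ps_eval n \<beta> z))
      (multi_idx n)"
    using n
    by (intro has_sum_add has_sum_uminusI has_sum_mul_var hs hs') auto
  then show ?thesis
    by (simp add: homological_op_def algebra_simps)
qed

definition part_free_of_x012 :: "((nat \<Rightarrow> nat) \<Rightarrow> complex) \<Rightarrow> (nat \<Rightarrow> nat) \<Rightarrow> complex" where
  "part_free_of_x012 A \<alpha> = (if \<alpha> 0 = 0 \<and> \<alpha> 1 = 0 \<and> \<alpha> 2 = 0 then A \<alpha> else 0)"

definition diag_sum ::
    "((nat \<Rightarrow> nat) \<Rightarrow> complex) \<Rightarrow> (nat \<Rightarrow> nat) \<Rightarrow> nat \<Rightarrow> nat \<Rightarrow> nat \<Rightarrow> nat \<Rightarrow> complex" where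
  "diag_sum A \<alpha> k a b m = (\<Sum>j<m. of_nat (k + b - j) * A (set012 \<alpha> (k + b - j) (a + b - j) j))"

text \<open>Solving \<open>homological_op \<beta> = A - part_free_of_x012 A\<close> coefficientwise is a first-order
  recursion along the diagonals \<open>(k + j, a + j, b - j)\<close>; for \<open>k \<ge> 2\<close> it is summed in closed
  form, which is consistent with the recursion at \<open>k = 1\<close> and at \<open>a = 0\<close> exactly because the
  diagonal sums \<open>subst_coeff (Dx A)\<close> vanish.\<close>
definition solution_coeff :: "nat \<Rightarrow> ((nat \<Rightarrow> nat) \<Rightarrow> complex) \<Rightarrow> (nat \<Rightarrow> nat) \<Rightarrow> complex" where
  "solution_coeff n A \<alpha> =
    (if \<alpha> \<notin> multi_idx n then 0
     else if \<alpha> 0 = 0 then A (set012 \<alpha> 0 (\<alpha> 1 + 1) (\<alpha> 2))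
     else if \<alpha> 0 = 1 then (if \<alpha> 1 = 0 then A (set012 \<alpha> 0 0 (\<alpha> 2 + 1)) else 0)
     else - (1 / (of_nat (\<alpha> 0) * of_nat (\<alpha> 0 - 1))) *
       diag_sum A \<alpha> (\<alpha> 0) (\<alpha> 1 + 1) (\<alpha> 2) (Suc (\<alpha> 2)))"

lemma homological_op_first_term:
  assumes n: "2 \<le> n" and "\<alpha> \<in> multi_idx n" "1 \<le> \<alpha> 0"
  shows "(if 1 \<le> \<alpha> 2 then of_nat (\<alpha> 0 + 1) * solution_coeff n A (set012 \<alpha> (\<alpha> 0 + 1) (\<alpha> 1) (\<alpha> 2 - 1))
      else 0)
     = - (1 / of_nat (\<alpha> 0)) * diag_sum A \<alpha> (\<alpha> 0) (\<alpha> 1) (\<alpha> 2) (\<alpha> 2)"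
proof (cases "1 \<le> \<alpha> 2")
  case False
  then have "\<alpha> 2 = 0" by simp
  with False show ?thesis unfolding diag_sum_def by simp
next
  case True
  define k a b where "k = \<alpha> 0" "a = \<alpha> 1" "b = \<alpha> 2"
  have kb: "1 \<le> k" "1 \<le> b" using assms True unfolding k_a_b_def by auto
  let ?\<alpha>' = "set012 \<alpha> (k + 1) a (b - 1)"
  have "diag_sum A ?\<alpha>' (k + 1) (a + 1) (b - 1) (Suc (b - 1)) = diag_sum A \<alpha> k a b b"
    unfolding diag_sum_def using kb by (intro sum.cong) auto
  then have "solution_coeff n A ?\<alpha>' = - (1 / (of_nat (k + 1) * of_nat k)) * diag_sum A \<alpha> k a b b"
    unfolding solution_coeff_def using set012_in_multi_idx[OF assms(2) n] kb by simp
  then have "of_nat (k + 1) * solution_coeff n A ?\<alpha>'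
      = of_nat (k + 1) * (- (1 / (of_nat (k + 1) * of_nat k)) * diag_sum A \<alpha> k a b b)"
    by (simp only:)
  also have "\<dots> = - (1 / of_nat k) * diag_sum A \<alpha> k a b b"
  proof -
    have cancel: "c * (- (1 / (c * d)) * X) = - (1 / d) * X" if "c \<noteq> 0" "d \<noteq> 0" for c d X :: complex
      using that by (simp add: field_simps)
    show ?thesis by (rule cancel) (use kb of_nat_neq_0[of k] in simp_all)
  qed
  finally show ?thesis using True unfolding k_a_b_def by simp
qed

lemma diag_sum_Fr:
  assumes n: "2 \<le> n" and "\<alpha> \<in> multi_idx n" "1 \<le> \<alpha> 0" "\<alpha> 1 = 0 \<or> \<alpha> 0 = 1"
    and vanish: "subst_coeff (Dx A) (set012 \<alpha> (\<alpha> 0 - 1 + \<alpha> 2) (\<alpha> 1 + \<alpha> 2) 0) = 0"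
  shows "diag_sum A \<alpha> (\<alpha> 0) (\<alpha> 1) (\<alpha> 2) (\<alpha> 2) + of_nat (\<alpha> 0) * A \<alpha> = 0"
proof -
  define k a b where "k = \<alpha> 0" "a = \<alpha> 1" "b = \<alpha> 2"
  define \<beta> where "\<beta> = set012 \<alpha> (k - 1 + b) (a + b) 0"
  have min: "min (\<beta> 0) (\<beta> 1) = b" unfolding \<beta>_def using assms(3,4) unfolding k_a_b_def by auto
  have "subst_coeff (Dx A) \<beta> = (\<Sum>j\<le>b. Dx A (set012 \<beta> (\<beta> 0 - j) (\<beta> 1 - j) j))"
    unfolding subst_coeff_def min by (simp add: \<beta>_def)
  also have "\<dots> = (\<Sum>j\<le>b. of_nat (k + b - j) * A (set012 \<alpha> (k + b - j) (a + b - j) j))"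
  proof (rule sum.cong)
    fix j assume "j \<in> {..b}"
    then have e: "Suc (k - Suc 0 + b - j) = k + b - j" using assms(3) unfolding k_a_b_def by auto
    then have e': "1 + (of_nat (k - Suc 0 + b - j) :: complex) = of_nat (k + b - j)"
      by (metis of_nat_Suc add.commute)
    show "Dx A (set012 \<beta> (\<beta> 0 - j) (\<beta> 1 - j) j)
        = of_nat (k + b - j) * A (set012 \<alpha> (k + b - j) (a + b - j) j)"
      unfolding Dx_def \<beta>_def by (simp add: upd_eq_set012 e e')
  qed simp
  also have "\<dots> = diag_sum A \<alpha> k a b b + of_nat k * A \<alpha>"
    unfolding diag_sum_def lessThan_Suc_atMost[symmetric] sum.lessThan_Suc
    by (simp add: k_a_b_def set012_self)
  finally show ?thesis using vanish unfolding \<beta>_def k_a_b_def by simp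
qed

lemma homological_op_solution_coeff:
  assumes n: "2 \<le> n" and "\<alpha> \<in> multi_idx n"
    and vanish: "\<forall>\<beta>\<in>multi_idx n. subst_coeff (Dx A) \<beta> = 0"
  shows "homological_op (solution_coeff n A) \<alpha> = A \<alpha> - part_free_of_x012 A \<alpha>"
proof -
  define k a b where "k = \<alpha> 0" "a = \<alpha> 1" "b = \<alpha> 2"
  have in_M: "set012 \<alpha> k' a' b' \<in> multi_idx n" for k' a' b'
    by (rule set012_in_multi_idx[OF assms(2) n])
  have first: "(if 1 \<le> b then of_nat (k + 1) * solution_coeff n A (set012 \<alpha> (k + 1) a (b - 1)) else 0)
      = - (1 / of_nat k) * diag_sum A \<alpha> k a b b" if "k \<ge> 1"
    using homological_op_first_term[OF n assms(2)] that unfolding k_a_b_def by simp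
  have op: "homological_op (solution_coeff n A) \<alpha>
      = (if 1 \<le> b then of_nat (k + 1) * solution_coeff n A (set012 \<alpha> (k + 1) a (b - 1)) else 0)
      + (if 1 \<le> a then (1 - of_nat k) * solution_coeff n A (set012 \<alpha> k (a - 1) b) else 0)"
    unfolding homological_op_coeff k_a_b_def ..
  consider "k = 0" | "k \<ge> 1" "a = 0 \<or> k = 1" | "k \<ge> 2" "a \<ge> 1" by linarith
  then show ?thesis
  proof cases
    case 1
    then show ?thesis
      unfolding op part_free_of_x012_def solution_coeff_def using in_M
      by (auto simp: k_a_b_def set012_self)
  next
    case 2
    have "diag_sum A \<alpha> k a b b + of_nat k * A \<alpha> = 0"
      using diag_sum_Fr[OF n assms(2)] 2 vanish in_M unfolding k_a_b_def by simp
    then have "diag_sum A \<alpha> k a b b = - (of_nat k * A \<alpha>)"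
      by (simp add: eq_neg_iff_add_eq_0)
    then have "- (1 / of_nat k) * diag_sum A \<alpha> k a b b = A \<alpha>"
      using 2 by simp
    then show ?thesis
      unfolding op first[OF 2(1)] part_free_of_x012_def using 2 by (auto simp: k_a_b_def)
  next
    case 3
    let ?\<alpha>' = "set012 \<alpha> k (a - 1) b"
    have "diag_sum A ?\<alpha>' k (a - 1 + 1) b (Suc b) = diag_sum A \<alpha> k a b b + of_nat k * A \<alpha>"
      unfolding diag_sum_def sum.lessThan_Suc using 3 by (simp add: k_a_b_def set012_self)
    then have "solution_coeff n A ?\<alpha>'
        = - (1 / (of_nat k * of_nat (k - 1))) * (diag_sum A \<alpha> k a b b + of_nat k * A \<alpha>)"
      unfolding solution_coeff_def using in_M 3 by simp
    moreover have "(of_nat (k - 1) :: complex) = of_nat k - 1" using 3 by (simp add: of_nat_diff)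
    ultimately have "- (1 / of_nat k) * diag_sum A \<alpha> k a b b + (1 - of_nat k) * solution_coeff n A ?\<alpha>'
        = A \<alpha>"
      using 3 by (simp add: field_simps)
    then show ?thesis
      unfolding op first[OF order.trans[OF one_le_numeral 3(1)]] part_free_of_x012_def
      using 3 by (simp add: k_a_b_def)
  qed
qed

lemma norm_coeff_set012_le:
  assumes n: "2 \<le> n" and A: "abs_summable_ps n A \<rho>" "0 < \<rho>" "\<rho> \<le> 1" and "\<alpha> \<in> multi_idx n"
    and "k + a + b \<le> 2 * (\<alpha> 0 + \<alpha> 1 + \<alpha> 2) + 1"
  shows "norm (A (set012 \<alpha> k a b)) * \<rho> ^ (2 * total_deg n \<alpha> + 1) \<le> majorant n A \<rho>"
proof (rule norm_coeff_le_majorant[OF A set012_in_multi_idx[OF assms(5) n]])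
  have arith: "T \<le> 2 * d + 1" if "T + s = d + m" "m \<le> 2 * s + 1" "s \<le> d" for T s d m :: nat
    using that by linarith
  have "\<alpha> 0 + \<alpha> 1 + \<alpha> 2 \<le> total_deg n \<alpha>"
    using total_deg_set012[OF n, of \<alpha> 0 0 0] by simp
  then show "total_deg n (set012 \<alpha> k a b) \<le> 2 * total_deg n \<alpha> + 1"
    by (rule arith[OF total_deg_set012[OF n] assms(6)])
qed

lemma norm_diag_sum_le:
  assumes n: "2 \<le> n" and A: "abs_summable_ps n A \<rho>" "0 < \<rho>" "\<rho> \<le> 1" and "\<alpha> \<in> multi_idx n"
  shows "norm (diag_sum A \<alpha> (\<alpha> 0) (\<alpha> 1 + 1) (\<alpha> 2) (Suc (\<alpha> 2))) * \<rho> ^ (2 * total_deg n \<alpha> + 1)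
    \<le> real ((Suc (total_deg n \<alpha>))^2) * majorant n A \<rho>"
proof -
  define d k a b where "d = total_deg n \<alpha>" "k = \<alpha> 0" "a = \<alpha> 1" "b = \<alpha> 2"
  define S where "S = majorant n A \<rho>"
  have kab: "k + a + b \<le> d" unfolding d_k_a_b_def using total_deg_set012[OF n, of \<alpha> 0 0 0] by simp
  have "norm (diag_sum A \<alpha> k (a + 1) b (Suc b))
      \<le> (\<Sum>j<Suc b. real (k + b - j) * norm (A (set012 \<alpha> (k + b - j) (a + 1 + b - j) j)))"
    unfolding diag_sum_def by (rule order.trans[OF norm_sum]) (simp only: norm_mult norm_of_nat order_refl)
  then have "norm (diag_sum A \<alpha> k (a + 1) b (Suc b)) * \<rho> ^ (2 * d + 1)
      \<le> (\<Sum>j<Suc b. real (k + b - j) * norm (A (set012 \<alpha> (k + b - j) (a + 1 + b - j) j))) * \<rho> ^ (2 * d + 1)"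
    using A(2) by (simp add: mult_right_mono)
  also have "\<dots> = (\<Sum>j<Suc b. real (k + b - j) *
      (norm (A (set012 \<alpha> (k + b - j) (a + 1 + b - j) j)) * \<rho> ^ (2 * d + 1)))"
    by (simp only: sum_distrib_right mult.assoc)
  also have "\<dots> \<le> (\<Sum>j<Suc b. real (Suc d) * S)"
  proof (rule sum_mono)
    fix j assume "j \<in> {..<Suc b}"
    then have "norm (A (set012 \<alpha> (k + b - j) (a + 1 + b - j) j)) * \<rho> ^ (2 * d + 1) \<le> S"
      unfolding S_def d_k_a_b_def by (intro norm_coeff_set012_le[OF n A assms(5)]) auto
    moreover have "real (k + b - j) \<le> real (Suc d)" using kab by simp
    ultimately show "real (k + b - j) * (norm (A (set012 \<alpha> (k + b - j) (a + 1 + b - j) j)) * \<rho> ^ (2 * d + 1))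
        \<le> real (Suc d) * S"
      using A(2) by (intro mult_mono) auto
  qed
  also have "\<dots> \<le> real (Suc d) * (real (Suc d) * S)"
    using kab majorant_nonneg[of \<rho> n A] A(2) unfolding S_def by (simp add: mult_right_mono)
  also have "\<dots> = real ((Suc d)^2) * S"
    by (simp only: of_nat_mult power2_eq_square mult.assoc)
  finally show ?thesis unfolding d_k_a_b_def S_def .
qed

lemma norm_solution_coeff_le:
  assumes n: "2 \<le> n" and A: "abs_summable_ps n A \<rho>" "0 < \<rho>" "\<rho> \<le> 1" and "\<alpha> \<in> multi_idx n"
  shows "norm (solution_coeff n A \<alpha>) * \<rho> ^ (2 * total_deg n \<alpha> + 1)
    \<le> real ((Suc (total_deg n \<alpha>))^2) * majorant n A \<rho>"
proof -
  define S where "S = majorant n A \<rho>"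
  have "S \<ge> 0" unfolding S_def using A(2) by (simp add: majorant_nonneg)
  then have S_le: "S \<le> real ((Suc (total_deg n \<alpha>))^2) * S"
    by (simp add: mult_le_cancel_right1)
  consider "\<alpha> 0 = 0" | "\<alpha> 0 = 1" "\<alpha> 1 = 0" | "\<alpha> 0 = 1" "\<alpha> 1 \<noteq> 0" | "\<alpha> 0 \<ge> 2" by linarith
  then show ?thesis
  proof cases
    case 1
    then have "solution_coeff n A \<alpha> = A (set012 \<alpha> 0 (\<alpha> 1 + 1) (\<alpha> 2))"
      using assms(5) unfolding solution_coeff_def by simp
    moreover have "norm (A (set012 \<alpha> 0 (\<alpha> 1 + 1) (\<alpha> 2))) * \<rho> ^ (2 * total_deg n \<alpha> + 1) \<le> S"
      unfolding S_def by (rule norm_coeff_set012_le[OF n A assms(5)]) simp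
    ultimately show ?thesis using S_le unfolding S_def by (metis order.trans)
  next
    case 2
    then have "solution_coeff n A \<alpha> = A (set012 \<alpha> 0 0 (\<alpha> 2 + 1))"
      using assms(5) unfolding solution_coeff_def by simp
    moreover have "norm (A (set012 \<alpha> 0 0 (\<alpha> 2 + 1))) * \<rho> ^ (2 * total_deg n \<alpha> + 1) \<le> S"
      unfolding S_def using 2 by (intro norm_coeff_set012_le[OF n A assms(5)]) simp
    ultimately show ?thesis using S_le unfolding S_def by (metis order.trans)
  next
    case 3
    with \<open>S \<ge> 0\<close> show ?thesis unfolding solution_coeff_def S_def by simp
  next
    case 4
    define D where "D = diag_sum A \<alpha> (\<alpha> 0) (\<alpha> 1 + 1) (\<alpha> 2) (Suc (\<alpha> 2))"
    have "1 \<le> real (\<alpha> 0)" "1 \<le> real (\<alpha> 0 - 1)" using 4 by auto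
    then have m: "1 \<le> real (\<alpha> 0) * real (\<alpha> 0 - 1)"
      using mult_mono[of 1 "real (\<alpha> 0)" 1 "real (\<alpha> 0 - 1)"] by simp
    have "norm (solution_coeff n A \<alpha>) = norm D / (real (\<alpha> 0) * real (\<alpha> 0 - 1))"
      using assms(5) 4 unfolding solution_coeff_def D_def by (simp add: norm_mult norm_divide del: of_nat_diff)
    also have "\<dots> \<le> norm D / 1"
      using m by (intro divide_left_mono) (auto simp del: of_nat_diff)
    finally have "norm (solution_coeff n A \<alpha>) * \<rho> ^ (2 * total_deg n \<alpha> + 1)
        \<le> norm D * \<rho> ^ (2 * total_deg n \<alpha> + 1)"
      using A(2) by (simp add: mult_right_mono)
    with norm_diag_sum_le[OF n A assms(5)] show ?thesis unfolding D_def by linarith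
  qed
qed

lemma summable_on_power_total_deg:
  fixes q :: real
  assumes "0 \<le> q" "q < 1"
  shows "(\<lambda>\<alpha>. q ^ total_deg n \<alpha>) summable_on multi_idx n"
proof -
  have geometric: "((\<lambda>j. q ^ j) has_sum (1 / (1 - q))) UNIV"
    using geometric_sums[of q] assms by (intro sums_nonneg_imp_has_sum) auto
  show ?thesis
  proof (induction n)
    case 0
    have "bij_betw (\<lambda>j. (\<lambda>_. 0::nat)(0 := j)) UNIV (multi_idx 0)"
      by (rule bij_betwI[where g="\<lambda>\<alpha>. \<alpha> 0"]) (auto simp: multi_idx_def fun_eq_iff)
    moreover have "(\<lambda>j. q ^ total_deg 0 ((\<lambda>_. 0::nat)(0 := j))) summable_on UNIV"
      using geometric by (simp add: total_deg_def summable_on_def) blast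
    ultimately show ?case using summable_on_reindex_bij_betw by blast
  next
    case (Suc n)
    have bij: "bij_betw (\<lambda>(\<beta>, j). \<beta>(Suc n := j)) (multi_idx n \<times> UNIV) (multi_idx (Suc n))"
      by (rule bij_betwI[where g="\<lambda>\<alpha>. (\<alpha>(Suc n := 0), \<alpha> (Suc n))"])
        (auto simp: multi_idx_def fun_eq_iff)
    have "(\<lambda>(\<beta>, j). q ^ (total_deg n \<beta> + j)) summable_on multi_idx n \<times> UNIV"
    proof (rule summable_on_SigmaI)
      show "((\<lambda>j. (\<lambda>(\<beta>, j). q ^ (total_deg n \<beta> + j)) (\<beta>, j)) has_sum (q ^ total_deg n \<beta> * (1 / (1 - q))))
          UNIV" for \<beta>
        using has_sum_cmult_right[OF geometric, of "q ^ total_deg n \<beta>"] by (simp add: power_add)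
      show "(\<lambda>\<beta>. q ^ total_deg n \<beta> * (1 / (1 - q))) summable_on multi_idx n"
        using summable_on_cmult_left[OF Suc.IH] .
    qed (use assms in auto)
    moreover have "total_deg (Suc n) (\<beta>(Suc n := j)) = total_deg n \<beta> + j" for \<beta> j
    proof -
      have "(\<Sum>i\<le>n. (\<beta>(Suc n := j)) i) = total_deg n \<beta>" unfolding total_deg_def by (rule sum.cong) auto
      then show ?thesis unfolding total_deg_def by simp
    qed
    ultimately have "(\<lambda>x. q ^ total_deg (Suc n) ((\<lambda>(\<beta>, j). \<beta>(Suc n := j)) x)) summable_on multi_idx n \<times> UNIV"
      by (simp add: case_prod_unfold)
    then show ?case using summable_on_reindex_bij_betw[OF bij] by blast
  qed
qed

lemma abs_summable_solution_coeff:
  assumes n: "2 \<le> n" and A: "abs_summable_ps n A r" "r > 0"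
  shows "abs_summable_ps n (solution_coeff n A) ((min r 1)^2 / 8)"
proof -
  define \<rho> where "\<rho> = min r 1"
  have \<rho>: "\<rho> > 0" "\<rho> \<le> 1" unfolding \<rho>_def using A by auto
  have A\<rho>: "abs_summable_ps n A \<rho>" by (rule abs_summable_ps_mono[OF A(1)]) (use \<rho> in \<open>auto simp: \<rho>_def\<close>)
  define S where "S = majorant n A \<rho>"
  have "S \<ge> 0" unfolding S_def using \<rho> by (simp add: majorant_nonneg)
  have "(\<lambda>\<alpha>. (S / \<rho>) * (1/2::real) ^ total_deg n \<alpha>) summable_on multi_idx n"
    by (rule summable_on_cmult_right[OF summable_on_power_total_deg]) auto
  then show ?thesis unfolding abs_summable_ps_def \<rho>_def[symmetric]
  proof (rule summable_on_comparison_test)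
    fix \<alpha> assume "\<alpha> \<in> multi_idx n"
    define d where "d = total_deg n \<alpha>"
    have "norm (solution_coeff n A \<alpha>) * (\<rho>^2/8) ^ d
        = norm (solution_coeff n A \<alpha>) * \<rho> ^ (2 * d + 1) / (\<rho> * 8 ^ d)"
      using \<rho> by (simp add: power_divide power_mult)
    also have "\<dots> \<le> real ((Suc d)^2) * S / (\<rho> * 8 ^ d)"
      using norm_solution_coeff_le[OF n A\<rho> \<rho> \<open>\<alpha> \<in> multi_idx n\<close>] \<rho>
      unfolding d_def S_def by (intro divide_right_mono) auto
    also have "\<dots> \<le> 4 ^ d * S / (\<rho> * 8 ^ d)"
    proof -
      have "(Suc d)^2 \<le> (2 ^ d)^2" by (rule power_mono[OF Suc_leI[OF less_exp]]) simp
      also have "(2 ^ d)^2 = (4::nat) ^ d" by (simp add: power2_eq_square power_mult_distrib[symmetric])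
      finally have "real ((Suc d)^2) \<le> 4 ^ d" by (metis of_nat_le_iff of_nat_numeral of_nat_power)
      then show ?thesis using \<open>S \<ge> 0\<close> \<rho> by (intro divide_right_mono mult_right_mono) auto
    qed
    also have "\<dots> = (S / \<rho>) * (1/2) ^ d"
    proof -
      have "(8::real) ^ d = 4 ^ d * 2 ^ d" by (simp add: power_mult_distrib[symmetric])
      then show ?thesis by (simp add: power_one_over)
    qed
    finally show "norm (solution_coeff n A \<alpha>) * (\<rho>^2/8) ^ total_deg n \<alpha> \<le> (S / \<rho>) * (1/2) ^ total_deg n \<alpha>"
      unfolding d_def .
  qed auto
qed

lemma abs_summable_ps_part_free_of_x012:
  assumes "abs_summable_ps n A r" "r \<ge> 0"
  shows "abs_summable_ps n (part_free_of_x012 A) r" "abs_summable_ps n (A - part_free_of_x012 A) r"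
proof -
  have dominated: "abs_summable_ps n B r" if "\<And>\<alpha>. norm (B \<alpha>) \<le> norm (A \<alpha>)" for B
    using assms(1) unfolding abs_summable_ps_def
    by (rule summable_on_comparison_test) (use assms(2) in \<open>auto intro: mult_right_mono that\<close>)
  show "abs_summable_ps n (part_free_of_x012 A) r" "abs_summable_ps n (A - part_free_of_x012 A) r"
    by (rule dominated; simp add: part_free_of_x012_def)+
qed

lemma part_free_of_x012_in_conv_ps_rest:
  assumes "A \<in> conv_ps n"
  shows "part_free_of_x012 A \<in> conv_ps_rest n"
proof -
  from assms obtain r where "r > 0" "abs_summable_ps n A r" by (rule conv_psE)
  with assms show ?thesis
    unfolding conv_ps_rest_iff conv_ps_iff free_of_x012_def
    using abs_summable_ps_part_free_of_x012(1) by (auto simp: part_free_of_x012_def)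
qed

lemma Fr_minus_part_free_of_x012:
  assumes "A \<in> Fr n f_sq"
  shows "A - part_free_of_x012 A \<in> Fr n f_sq"
proof -
  from assms have A: "A \<in> conv_ps n" "Dx_vanishes_on_zero_set n A" unfolding Fr_f_sq_iff by auto
  then obtain r where "r > 0" "abs_summable_ps n A r" by (metis conv_psE)
  then have "A - part_free_of_x012 A \<in> conv_ps n"
    using A(1) abs_summable_ps_part_free_of_x012(2) unfolding conv_ps_iff
    by (auto simp: part_free_of_x012_def)
  moreover have "Dx (A - part_free_of_x012 A) = Dx A"
    unfolding Dx_def by (auto simp: fun_eq_iff part_free_of_x012_def)
  ultimately show ?thesis using A(2) unfolding Fr_f_sq_iff Dx_vanishes_on_zero_set_def by simp
qed

lemma Fr_minus_part_free_of_x012_in_Sp: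
  assumes n: "2 \<le> n" and "A \<in> Fr n f_sq"
  shows "A - part_free_of_x012 A \<in> Sp n f_sq"
proof -
  define A' where "A' = A - part_free_of_x012 A"
  define \<beta> where "\<beta> = solution_coeff n A"
  from assms(2) have "A \<in> conv_ps n" unfolding Fr_f_sq_iff by simp
  then obtain r where r: "r > 0" "abs_summable_ps n A r" by (rule conv_psE)
  define rb where "rb = (min r 1)^2 / 8"
  have rb: "rb > 0" "abs_summable_ps n \<beta> rb"
    unfolding rb_def \<beta>_def using r abs_summable_solution_coeff[OF n r(2,1)] by auto
  then have "\<beta> \<in> conv_ps n" unfolding conv_ps_iff \<beta>_def by (auto simp: solution_coeff_def)
  have coeffs: "homological_op \<beta> \<alpha> = A' \<alpha>" if "\<alpha> \<in> multi_idx n" for \<alpha>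
    unfolding \<beta>_def A'_def using homological_op_solution_coeff[OF n that]
      Fr_imp_subst_coeff_Dx_eq_0[OF n assms(2)] by simp
  have "((\<lambda>t. ps_eval n \<beta> (z(0 := t)) / (z 2 - t * z 1)) has_field_derivative ps_eval n A' z / f_sq z)
      (at (z 0))" if "polydisc n (rb/2) z" "f_sq z \<noteq> 0" for z
  proof -
    have z: "\<forall>i\<le>n. norm (z i) < rb/2" using that(1) unfolding polydisc_def by auto
    then have "((\<lambda>\<alpha>. homological_op \<beta> \<alpha> * monomial_val n \<alpha> z) has_sum
        (ps_eval n (Dx \<beta>) z * (z 2 - z 0 * z 1) + z 1 * ps_eval n \<beta> z)) (multi_idx n)"
      by (intro has_sum_homological_op[OF n rb(2,1)]) (auto intro: less_imp_le)
    then have "ps_eval n A' z = ps_eval n (Dx \<beta>) z * (z 2 - z 0 * z 1) + z 1 * ps_eval n \<beta> z"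
      unfolding ps_eval_def using coeffs by (metis (no_types, lifting) infsumI infsum_cong)
    then show ?thesis
      using has_field_derivative_over_f1_iff[OF rb(2,1) z that(2)] by blast
  qed
  moreover have "A' \<in> Fr n f_sq" unfolding A'_def by (rule Fr_minus_part_free_of_x012[OF assms(2)])
  ultimately show ?thesis
    unfolding Sp_def A'_def[symmetric] using \<open>\<beta> \<in> conv_ps n\<close> rb(1)
    by (intro CollectI conjI bexI[of _ \<beta>] exI[of _ "rb/2"]) auto
qed

lemma one_ps_in_conv_ps_rest: "one_ps \<in> conv_ps_rest n"
proof -
  have "((\<lambda>\<alpha>. norm (one_ps \<alpha>) * 1 ^ total_deg n \<alpha>)
      has_sum (\<Sum>\<alpha>\<in>{\<lambda>_. 0}. norm (one_ps \<alpha>) * 1 ^ total_deg n \<alpha>)) {\<lambda>_. 0}"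
    by (rule has_sum_finite) simp
  then have "((\<lambda>\<alpha>. norm (one_ps \<alpha>) * 1 ^ total_deg n \<alpha>) has_sum 1) {\<lambda>_. 0}"
    by (simp add: one_ps_def)
  then have "((\<lambda>\<alpha>. norm (one_ps \<alpha>) * 1 ^ total_deg n \<alpha>) has_sum 1) (multi_idx n)"
    by (rule has_sum_cong_neutral[THEN iffD1, rotated -1]) (auto simp: one_ps_def multi_idx_def)
  then have "abs_summable_ps n one_ps 1"
    unfolding abs_summable_ps_def by (rule has_sum_imp_summable)
  then show ?thesis
    unfolding conv_ps_rest_iff conv_ps_iff free_of_x012_def
    by (auto simp: one_ps_def multi_idx_def intro: exI[of _ 1])
qed

theorem mainTheorem17:
  fixes n :: nat and f :: "(nat \<Rightarrow> complex) \<Rightarrow> complex"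
  assumes "n \<ge> 2"
    and "\<And>z. f z = (z 2 - z 0 * z 1) ^ 2"
  shows "one_ps \<in> Fr n f
    \<and> (\<forall>c\<in>conv_ps_rest n. c \<in> Fr n f)
    \<and> (\<forall>c\<in>conv_ps_rest n. \<forall>d\<in>conv_ps_rest n. c - d \<in> Sp n f \<longrightarrow> c = d)
    \<and> (\<forall>A\<in>Fr n f. \<exists>c\<in>conv_ps_rest n. A - c \<in> Sp n f)"
proof -
  have f: "f = f_sq" by (rule ext) (simp add: assms(2) f_sq_def)
  have uniqueness: "c = d" if "c \<in> conv_ps_rest n" "d \<in> conv_ps_rest n" "c - d \<in> Sp n f_sq" for c d
  proof -
    have "free_of_x012 (c - d)"
      using that(1,2) unfolding conv_ps_rest_iff by (simp add: free_of_x012_diff)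
    with that(3) have "c - d = (\<lambda>_. 0)" by (rule free_of_x012_Sp_eq_0)
    then show ?thesis by (simp add: fun_eq_iff)
  qed
  have existence: "\<exists>c\<in>conv_ps_rest n. A - c \<in> Sp n f_sq" if "A \<in> Fr n f_sq" for A
  proof
    show "A - part_free_of_x012 A \<in> Sp n f_sq" by (rule Fr_minus_part_free_of_x012_in_Sp[OF assms(1) that])
    show "part_free_of_x012 A \<in> conv_ps_rest n"
      using that unfolding Fr_f_sq_iff by (simp add: part_free_of_x012_in_conv_ps_rest)
  qed
  show ?thesis
    unfolding f using conv_ps_rest_subset_Fr one_ps_in_conv_ps_rest uniqueness existence
    by (intro conjI ballI impI) auto
qed

end
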